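(* Let $\varphi$ be an Orlicz $N$-function with Young–Fenchel transform $\psi$ and let $q_\varphi$ be the generalized inverse of the density of $\varphi$. Let $\{X_{k,n},k,n\ge1\}$ be a double array of independent $\varphi$-subgaussian random variables and $g$ a positive non-decreasing function with $\tau_\varphi(X_{k,n})\le g(\ln(kn))$ for all $k,n\ge1$. Set $a_{m,j}=g(\ln(mj))\psi^{-1}(\ln(mj))$ and $Y_{m,j}=\max_{1\le k\le m,1\le n\le j}X_{k,n}-a_{m,j}$. Assume: (1) there exists $\varepsilon_0>0$ such that for every $\varepsilon\in(0,\varepsilon_0]$, $\int_0^\infty\psi(x)q_\varphi(x)\exp\left(-\frac{\varepsilon q_\varphi(x)}{g(\psi(x)+\ln 2)}\right)dx<+\infty$; (2) $\kappa$ is a positive increasing differentiable function whose derivative $r=\kappa'$ is non-decreasing on $(0,\infty)$, and there is $C>0$ such that $P\left(\frac{X_{k,n}}{g(\ln(kn))}<x\right)\le\exp(-Ce^{-\kappa(x)})$ for all $k,n\ge1$ and $x>0$; (3) $\psi(x)-\kappa\left(\frac{xg(x)}{g(0)}\right)\ge C_0(x)$ for some function $C_0$; (4) there exist $A,\varepsilon_1>0$ such that for every $\varepsilon\in(0,\varepsilon_1]$ $$\int_A^{+\infty}\exp\left(-\frac{Cy}{2}\exp\left(-\kappa\left(\frac{g(\ln y)}{g(0)}\psi^{-1}(\ln y)-\frac{\varepsilon}{g(\ln y)}\right)\right)\right)dy<+\infty$$ and $$\int_A^{+\infty}\psi(y)q_\varphi(y)\exp\left(\psi(y)-\frac C2\exp\left(C_0(y)+\frac{\varepsilon\,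 r\left(\frac{yg(\psi(y))}{g(0)}-\frac{\varepsilon}{g(\psi(y))}\right)}{g(\psi(y))}\right)\right)dy<+\infty.$$ Then $\lim_{m\vee j\to\infty}Y_{m,j}=0$ almost surely.
   Context: An Orlicz $N$-function is a continuous even convex function $\varphi:\mathbb R\to\mathbb R$ with $\varphi(0)=0$, increasing on $(0,\infty)$, with $\varphi(x)/x\to0$ as $x\to0$ and $\varphi(x)/x\to+\infty$ as $x\to+\infty$. It can be written $\varphi(x)=\int_0^{|x|}p_\varphi(t)\,dt$ with non-decreasing density $p_\varphi$; its generalized inverse is $q_\varphi(t)=\sup\{u\ge0:p_\varphi(u)\le t\}$. The Young–Fenchel transform is $\psi(x)=\sup_{y\in\mathbb R}(xy-\varphi(y))$, with $\psi(x)=\int_0^{|x|}q_\varphi(t)dt$; $\psi^{-1}$ is the inverse of $\psi$ on $[0,\infty)$. A random variable $X$ is $\varphi$-subgaussian if $EX=0$ and there is a finite $a>0$ with $E\exp(tX)\le\exp(\varphi(at))$ for all $t$; $\tau_\varphi(X)=\inf\{a>0:E\exp(tX)\le\exp(\varphi(at))\ \forall t\}$. $\lim_{m\vee j\to\infty}b_{m,j}=b$ means: for every $\varepsilon>0$ there is $N$ with $|b_{m,j}-b|<\varepsilon$ whenever $\max(m,j)\ge N$. *)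

theory Defs
  imports "HOL-Probability.Probability"
begin

definition orlicz_N_function :: "(real \<Rightarrow> real) \<Rightarrow> bool" where
  "orlicz_N_function \<phi> \<longleftrightarrow>
     continuous_on UNIV \<phi> \<and> (\<forall>x. \<phi> (- x) = \<phi> x) \<and> convex_on UNIV \<phi> \<and> \<phi> 0 = 0 \<and>
     strict_mono_on {0<..} \<phi> \<and>
     ((\<lambda>x. \<phi> x / x) \<longlongrightarrow> 0) (at_right 0) \<and>
     filterlim (\<lambda>x. \<phi> x / x) at_top at_top"

definition orlicz_density :: "(real \<Rightarrow> real) \<Rightarrow> (real \<Rightarrow> real) \<Rightarrow> bool" where
  "orlicz_density \<phi> p \<longleftrightarrow> mono_on {0..} p \<and>
     (\<forall>x. p integrable_on {0..\<bar>x\<bar>} \<and> \<phi> x = integral {0..\<bar>x\<bar>} p)"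

definition gen_inverse :: "(real \<Rightarrow> real) \<Rightarrow> real \<Rightarrow> real" where
  "gen_inverse p t = Sup {u. u \<ge> 0 \<and> p u \<le> t}"

definition young_fenchel :: "(real \<Rightarrow> real) \<Rightarrow> real \<Rightarrow> real" where
  "young_fenchel \<phi> x = (SUP y. x * y - \<phi> y)"

definition inv_pos :: "(real \<Rightarrow> real) \<Rightarrow> real \<Rightarrow> real" where
  "inv_pos \<psi> = the_inv_into {0..} \<psi>"

definition mgf_bound :: "'a measure \<Rightarrow> (real \<Rightarrow> real) \<Rightarrow> ('a \<Rightarrow> real) \<Rightarrow> real \<Rightarrow> bool" where
  "mgf_bound M \<phi> X a \<longleftrightarrow>
     (\<forall>t. integrable M (\<lambda>\<omega>. exp (t * X \<omega>)) \<and>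
          (\<integral>\<omega>. exp (t * X \<omega>) \<partial>M) \<le> exp (\<phi> (a * t)))"

definition phi_subgaussian :: "'a measure \<Rightarrow> (real \<Rightarrow> real) \<Rightarrow> ('a \<Rightarrow> real) \<Rightarrow> bool" where
  "phi_subgaussian M \<phi> X \<longleftrightarrow>
     X \<in> borel_measurable M \<and> integrable M X \<and> (\<integral>\<omega>. X \<omega> \<partial>M) = 0 \<and>
     (\<exists>a>0. mgf_bound M \<phi> X a)"

definition tau_phi :: "'a measure \<Rightarrow> (real \<Rightarrow> real) \<Rightarrow> ('a \<Rightarrow> real) \<Rightarrow> real" where
  "tau_phi M \<phi> X = Inf {a. a > 0 \<and> mgf_bound M \<phi> X a}"

definition double_lim :: "(nat \<Rightarrow> nat \<Rightarrow> real) \<Rightarrow> real \<Rightarrow> bool" where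
  "double_lim b l \<longleftrightarrow>
     (\<forall>\<epsilon>>0. \<exists>N. \<forall>m j. m \<ge> 1 \<longrightarrow> j \<ge> 1 \<longrightarrow> max m j \<ge> N \<longrightarrow> \<bar>b m j - l\<bar> < \<epsilon>)"

end

theory Submission
  imports Defs
begin

text \<open>
  Write \<open>a(L) = g(L) \<psi>\<inverse>(L)\<close> (\<open>norming\<close> below), so that the centring constant of the
  \<open>m \<times> j\<close> rectangle is \<open>a(ln(mj))\<close>.

  Upper bound: the Chernoff bound together with \<open>\<tau>\<^sub>\<phi>(X k n) \<le> g(ln(kn))\<close> gives
  \<open>P(X k n > a(ln(kn)) + \<epsilon>) \<le> exp(-\<epsilon> q(\<psi>\<inverse>(ln(kn))) / g(ln(kn))) / (kn)\<close>. Grouping the pairs into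
  the blocks \<open>e^(ih) \<le> kn < e^((i+1)h)\<close>, which hold \<open>O(i e^(ih))\<close> pairs each, the sum of these
  probabilities is dominated by the integral in condition (1), because \<open>\<psi>\<inverse>\<close> maps the \<open>i\<close>-th
  block onto an interval over which \<open>\<integral> q \<ge> h/2\<close>. By Borel--Cantelli, almost surely only
  finitely many \<open>X k n\<close> exceed \<open>a(ln(kn)) + \<epsilon>\<close>.

  Lower bound: by independence and condition (2), all \<open>X k n\<close> of an \<open>m \<times> j\<close> rectangle stay
  below \<open>t > 0\<close> with probability at most \<open>exp(-C m j exp(-\<kappa>(t / g(0))))\<close>. For the grid of
  rectangles \<open>\<lceil>e^(ah)\<rceil> \<times> \<lceil>e^(bh)\<rceil>\<close> these probabilities are dominated by the first integral in
  condition (4), so almost surely only finitely many grid rectangles stay below their centring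
  constant minus \<open>\<epsilon>\<close>; every large rectangle contains a grid rectangle whose centring
  constant is at least as large.

  Since \<open>a(L) \<rightarrow> \<infinity>\<close>, the finitely many exceptional variables eventually do not affect the
  maximum, and the maximum minus \<open>a(ln(mj))\<close> tends to \<open>0\<close>.
\<close>

section \<open>Counting lattice points in blocks\<close>

lemma harm_le_one_plus_ln: "1 \<le> n \<Longrightarrow> harm n \<le> 1 + ln (real n)"
  using euler_mascheroni_sequence_decreasing[of 1 n] by (simp add: harm_def)

lemma pairs_prod_less_subset:
  "{(k, n). 1 \<le> k \<and> 1 \<le> n \<and> real (k * n) < X} \<subseteq> (SIGMA k:{1..nat \<lfloor>X\<rfloor>}. {1..nat \<lfloor>X / real k\<rfloor>})"
proof clarify
  fix k n :: nat assume kn: "1 \<le> k" "1 \<le> n" "real (k * n) < X"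
  have prod: "real k * real n < X" using kn by simp
  have "real k \<le> real k * real n" using kn by simp
  then have "real k \<le> X" using prod by linarith
  moreover have "real n \<le> X / real k" using prod kn by (simp add: field_simps)
  ultimately show "k \<in> {1..nat \<lfloor>X\<rfloor>} \<and> n \<in> {1..nat \<lfloor>X / real k\<rfloor>}"
    using kn by (auto simp: le_nat_floor)
qed

lemma finite_pairs_prod_less: "finite {(k, n). 1 \<le> k \<and> 1 \<le> n \<and> real (k * n) < X}"
  by (rule finite_subset[OF pairs_prod_less_subset]) simp

lemma card_pairs_prod_less:
  fixes X :: real assumes X: "X \<ge> 1"
  shows "real (card {(k, n). 1 \<le> k \<and> 1 \<le> n \<and> real (k * n) < X}) \<le> X * (1 + ln X)"
proof -
  define K where "K = nat \<lfloor>X\<rfloor>"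
  have K: "1 \<le> K" "real K \<le> X" using X by (auto simp: K_def le_nat_floor)
  have "card {(k, n). 1 \<le> k \<and> 1 \<le> n \<and> real (k * n) < X} \<le> (\<Sum>k=1..K. nat \<lfloor>X / real k\<rfloor>)"
    using card_mono[OF _ pairs_prod_less_subset] by (simp add: K_def card_SigmaI)
  then have "real (card {(k, n). 1 \<le> k \<and> 1 \<le> n \<and> real (k * n) < X})
      \<le> (\<Sum>k=1..K. real (nat \<lfloor>X / real k\<rfloor>))"
    by (metis (mono_tags) of_nat_mono of_nat_sum)
  also have "\<dots> \<le> (\<Sum>k=1..K. X * inverse (real k))"
    using X by (intro sum_mono) (simp add: divide_inverse)
  also have "\<dots> = X * harm K" by (simp add: harm_def sum_distrib_left)
  also have "\<dots> \<le> X * (1 + ln X)"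
  proof -
    have "ln (real K) \<le> ln X" using K by simp
    then have "harm K \<le> 1 + ln X" using K harm_le_one_plus_ln[of K] by linarith
    then show ?thesis using X by (intro mult_left_mono) auto
  qed
  finally show ?thesis .
qed

lemma one_le_of_nat_mult: "1 \<le> k \<Longrightarrow> 1 \<le> n \<Longrightarrow> 1 \<le> real (k * n)"
  using mult_le_mono[of 1 k 1 n] by (metis mult_1 of_nat_1 of_nat_le_iff)

lemma floor_bracket:
  fixes h L :: real assumes "0 < h" "0 \<le> L"
  shows "real (nat \<lfloor>L / h\<rfloor>) * h \<le> L" "L < (real (nat \<lfloor>L / h\<rfloor>) + 1) * h"
proof -
  have "0 \<le> \<lfloor>L / h\<rfloor>" using assms by simp
  then have "real (nat \<lfloor>L / h\<rfloor>) = real_of_int \<lfloor>L / h\<rfloor>" by simp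
  then have "real (nat \<lfloor>L / h\<rfloor>) \<le> L / h" "L / h < real (nat \<lfloor>L / h\<rfloor>) + 1"
    by (simp_all add: of_int_floor_le)
  then show "real (nat \<lfloor>L / h\<rfloor>) * h \<le> L" "L < (real (nat \<lfloor>L / h\<rfloor>) + 1) * h"
    using assms by (simp_all only: pos_le_divide_eq pos_divide_less_eq)
qed

definition prod_block :: "real \<Rightarrow> nat \<Rightarrow> (nat \<times> nat) set" where
  "prod_block h i =
     {(k, n). 1 \<le> k \<and> 1 \<le> n \<and> exp (real i * h) \<le> real (k * n) \<and> real (k * n) < exp ((real i + 1) * h)}"

lemma prod_block_subset: "prod_block h i \<subseteq> {(k, n). 1 \<le> k \<and> 1 \<le> n \<and> real (k * n) < exp ((real i + 1) * h)}"
  by (auto simp: prod_block_def)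

lemma finite_prod_block: "finite (prod_block h i)"
  using finite_subset[OF prod_block_subset finite_pairs_prod_less] .

lemma card_prod_block_le:
  assumes "0 < h"
  shows "real (card (prod_block h i)) \<le> exp ((real i + 1) * h) * (1 + (real i + 1) * h)"
proof -
  have "card (prod_block h i) \<le> card {(k, n). 1 \<le> k \<and> 1 \<le> n \<and> real (k * n) < exp ((real i + 1) * h)}"
    by (intro card_mono[OF finite_pairs_prod_less prod_block_subset])
  also have "real \<dots> \<le> exp ((real i + 1) * h) * (1 + ln (exp ((real i + 1) * h)))"
    using assms by (intro card_pairs_prod_less) simp
  finally show ?thesis by simp
qed

lemma disjoint_family_prod_block:
  assumes "0 < h" shows "disjoint_family (prod_block h)"
proof (unfold disjoint_family_on_def, intro ballI impI equals0I)
  fix i j pr assume ij: "i \<noteq> j" and pr: "pr \<in> prod_block h i \<inter> prod_block h j"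
  obtain k n where "pr = (k, n)" by force
  with pr have "exp (real i * h) \<le> real (k * n)" "real (k * n) < exp ((real j + 1) * h)"
    "exp (real j * h) \<le> real (k * n)" "real (k * n) < exp ((real i + 1) * h)"
    by (auto simp: prod_block_def simp del: of_nat_mult)
  then have "exp (real i * h) < exp ((real j + 1) * h)" "exp (real j * h) < exp ((real i + 1) * h)"
    by linarith+
  then have "real i * h < (real j + 1) * h" "real j * h < (real i + 1) * h" by simp_all
  then have "real i < real j + 1" "real j < real i + 1" using assms by simp_all
  with ij show False by linarith
qed

lemma mem_prod_block:
  assumes h: "0 < h" and kn: "1 \<le> k" "1 \<le> n"
  shows "(k, n) \<in> prod_block h (nat \<lfloor>ln (real (k * n)) / h\<rfloor>)"
proof -
  define L where "L = ln (real (k * n))"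
  have kn1: "1 \<le> real (k * n)" using kn by (simp del: of_nat_mult)
  then have L: "0 \<le> L" "exp L = real (k * n)" by (simp_all add: L_def del: of_nat_mult)
  from floor_bracket[OF h L(1)]
  have "exp (real (nat \<lfloor>L / h\<rfloor>) * h) \<le> exp L" "exp L < exp ((real (nat \<lfloor>L / h\<rfloor>) + 1) * h)"
    by simp_all
  then show ?thesis using kn unfolding L(2) L_def[symmetric] by (simp add: prod_block_def)
qed

definition exp_grid :: "real \<Rightarrow> nat \<Rightarrow> nat" where
  "exp_grid h a = nat \<lceil>exp (real a * h)\<rceil>"

lemma exp_grid_ge: "exp (real a * h) \<le> real (exp_grid h a)"
  unfolding exp_grid_def by (rule real_nat_ceiling_ge)

lemma exp_grid_le: "exp (real a * h) \<le> real m \<Longrightarrow> exp_grid h a \<le> m"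
  unfolding exp_grid_def by (simp add: nat_le_iff ceiling_le_iff)

lemma exp_grid_pos: "1 \<le> exp_grid h a"
proof -
  have "1 \<le> \<lceil>exp (real a * h)\<rceil>" by (simp add: one_le_ceiling)
  then have "nat 1 \<le> nat \<lceil>exp (real a * h)\<rceil>" by (rule nat_mono)
  then show ?thesis by (simp add: exp_grid_def)
qed

lemma exp_bracket:
  fixes h :: real and m :: nat assumes "0 < h" "1 \<le> m"
  obtains a :: nat where "exp (real a * h) \<le> real m" "ln (real m) < (real a + 1) * h"
    "real m < exp ((real a + 1) * h)"
proof -
  define a where "a = nat \<lfloor>ln (real m) / h\<rfloor>"
  have "0 \<le> ln (real m)" using assms by simp
  from floor_bracket[OF assms(1) this]
  have "real a * h \<le> ln (real m)" "ln (real m) < (real a + 1) * h" by (simp_all add: a_def)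
  moreover from this have "exp (real a * h) \<le> exp (ln (real m))" "exp (ln (real m)) < exp ((real a + 1) * h)"
    by simp_all
  ultimately show ?thesis using assms(2) by (intro that) simp_all
qed

lemma exp_grid_cell:
  fixes h :: real and m j :: nat assumes h: "0 < h" and m: "1 \<le> m" and j: "1 \<le> j"
  obtains a b where "exp_grid h a \<le> m" "exp_grid h b \<le> j" "ln (real (m * j)) \<le> (real (a + b) + 2) * h"
    "real m < exp ((real a + 1) * h)" "real j < exp ((real b + 1) * h)"
proof -
  obtain a where a: "exp (real a * h) \<le> real m" "ln (real m) < (real a + 1) * h"
    "real m < exp ((real a + 1) * h)"
    using exp_bracket[OF h m] .
  obtain b where b: "exp (real b * h) \<le> real j" "ln (real j) < (real b + 1) * h"
    "real j < exp ((real b + 1) * h)"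
    using exp_bracket[OF h j] .
  have "ln (real m) + ln (real j) \<le> (real a + 1) * h + (real b + 1) * h"
    using a(2) b(2) by linarith
  then have "ln (real (m * j)) \<le> (real (a + b) + 2) * h"
    using m j by (simp add: ln_mult algebra_simps)
  from exp_grid_le[OF a(1)] exp_grid_le[OF b(1)] this a(3) b(3) show ?thesis by (rule that)
qed

lemma exp_increment_ge:
  fixes h :: real assumes h: "0 < h" "h \<le> 1"
  shows "(real s + 1) * h\<^sup>2 \<le> exp ((real s + 3) * h) - exp ((real s + 2) * h)"
proof -
  have "(real s + 1) * h \<le> 1 + real s * h" using h by (simp add: algebra_simps)
  also have "\<dots> \<le> exp (real s * h)" by (rule exp_ge_add_one_self)
  also have "\<dots> \<le> exp ((real s + 2) * h)" using h by simp
  finally have "(real s + 1) * h \<le> exp ((real s + 2) * h)" .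
  moreover have "h \<le> exp h - 1" using exp_ge_add_one_self[of h] by linarith
  ultimately have "(real s + 1) * h * h \<le> exp ((real s + 2) * h) * (exp h - 1)"
    using h by (intro mult_mono) auto
  also have "\<dots> = exp ((real s + 3) * h) - exp ((real s + 2) * h)"
    by (simp add: algebra_simps exp_add[symmetric])
  finally show ?thesis by (simp add: power2_eq_square mult.assoc)
qed

definition diagonal :: "nat \<Rightarrow> (nat \<times> nat) set" where
  "diagonal s = (\<lambda>a. (a, s - a)) ` {..s}"

lemma finite_diagonal: "finite (diagonal s)"
  by (simp add: diagonal_def)

lemma card_diagonal_le: "card (diagonal s) \<le> s + 1"
  unfolding diagonal_def using card_image_le[of "{..s}" "\<lambda>a. (a, s - a)"] by simp

lemma mem_diagonal: "(a, b) \<in> diagonal s \<longleftrightarrow> a + b = s"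
  unfolding diagonal_def by force

lemma disjoint_family_diagonal: "disjoint_family diagonal"
  unfolding disjoint_family_on_def
proof (intro ballI impI equals0I)
  fix m n :: nat and ab :: "nat \<times> nat" assume "m \<noteq> n" "ab \<in> diagonal m \<inter> diagonal n"
  then have "fst ab + snd ab = m" "fst ab + snd ab = n" by (auto simp: diagonal_def)
  with \<open>m \<noteq> n\<close> show False by simp
qed

section \<open>Summation and Borel--Cantelli over blocks\<close>

lemma disjoint_family_mono_intervals:
  fixes u :: "nat \<Rightarrow> real" assumes "mono u"
  shows "disjoint_family (\<lambda>i. {u i..<u (Suc i)})"
proof (unfold disjoint_family_on_def, intro ballI impI)
  fix i j :: nat assume "i \<noteq> j"
  have "u (Suc i) \<le> u j" if "i < j" for i j
    using that by (intro monoD[OF assms]) simp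
  from this[of i j] this[of j i] \<open>i \<noteq> j\<close> show "{u i..<u (Suc i)} \<inter> {u j..<u (Suc j)} = {}"
    by (cases i j rule: linorder_cases) auto
qed

lemma summable_by_disjoint_nn_integrals:
  fixes f :: "nat \<Rightarrow> real \<Rightarrow> real" and B :: "nat \<Rightarrow> real set" and I :: "real \<Rightarrow> ennreal"
    and c :: "nat \<Rightarrow> real"
  assumes meas: "\<And>i. f i \<in> borel_measurable lborel" and nonneg: "\<And>i x. 0 \<le> f i x"
    and disjoint: "disjoint_family B" and support: "\<And>i x. x \<notin> B i \<Longrightarrow> f i x = 0"
    and dominated: "\<And>i x. x \<in> B i \<Longrightarrow> ennreal (f i x) \<le> I x" and finite: "(\<integral>\<^sup>+x. I x \<partial>lborel) < \<infinity>"
    and c_nonneg: "\<And>i. 0 \<le> c i" and c_le: "\<And>i. ennreal (c i) \<le> (\<integral>\<^sup>+x. f i x \<partial>lborel)"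
  shows "summable c"
proof (rule summable_suminf_not_top[OF c_nonneg])
  have pointwise: "(\<Sum>i. ennreal (f i x)) \<le> I x" for x
  proof (cases "\<exists>i. x \<in> B i")
    case True
    then obtain i where i: "x \<in> B i" by blast
    have "f j x = 0" if "j \<notin> {i}" for j
      using support[of x j] disjoint i that by (auto simp: disjoint_family_on_def)
    then have "(\<Sum>j. ennreal (f j x)) = (\<Sum>j\<in>{i}. ennreal (f j x))"
      by (intro suminf_finite) auto
    then show ?thesis using dominated[OF i] by simp
  qed (simp add: support)
  have "(\<Sum>i. ennreal (c i)) \<le> (\<Sum>i. \<integral>\<^sup>+x. f i x \<partial>lborel)"
    by (intro suminf_le c_le) auto
  also have "\<dots> = (\<integral>\<^sup>+x. (\<Sum>i. ennreal (f i x)) \<partial>lborel)"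
    using meas by (intro nn_integral_suminf[symmetric]) simp
  also have "\<dots> \<le> (\<integral>\<^sup>+x. I x \<partial>lborel)"
    by (intro nn_integral_mono pointwise)
  finally show "(\<Sum>i. ennreal (c i)) \<noteq> \<top>" using finite by (auto simp: top_unique)
qed

lemma summable_prod_decode_by_blocks:
  fixes f :: "nat \<times> nat \<Rightarrow> real" and F :: "nat \<Rightarrow> (nat \<times> nat) set"
  assumes nonneg: "\<And>pr. 0 \<le> f pr" and finite: "\<And>i. finite (F i)" and disjoint: "disjoint_family F"
    and cover: "\<And>pr. f pr \<noteq> 0 \<Longrightarrow> \<exists>i. pr \<in> F i"
    and summable: "summable (\<lambda>i. \<Sum>pr\<in>F i. f pr)"
  shows "summable (\<lambda>j. f (prod_decode j))"
proof (rule summable_suminf_not_top)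
  have block_sum: "ennreal (f pr) = (\<Sum>i. ennreal (f pr) * indicator (F i) pr)" for pr
  proof (cases "f pr = 0")
    case False
    then obtain i where i: "pr \<in> F i" using cover by blast
    have "(\<Sum>j. ennreal (f pr) * indicator (F j) pr) = (\<Sum>j\<in>{i}. ennreal (f pr) * indicator (F j) pr)"
      using disjoint i by (intro suminf_finite) (auto simp: disjoint_family_on_def indicator_def)
    then show ?thesis using i by simp
  qed simp
  have "(\<Sum>j. ennreal (f (prod_decode j))) = (\<integral>\<^sup>+j. f (prod_decode j) \<partial>count_space UNIV)"
    by (simp add: nn_integral_count_space_nat)
  also have "\<dots> = (\<integral>\<^sup>+pr. f pr \<partial>count_space UNIV)"
    by (rule nn_integral_bij_count_space[of prod_decode UNIV UNIV "\<lambda>pr. ennreal (f pr)"])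
      (simp add: bij_prod_decode)
  also have "\<dots> = (\<Sum>i. \<integral>\<^sup>+pr. ennreal (f pr) * indicator (F i) pr \<partial>count_space UNIV)"
    by (subst block_sum) (rule nn_integral_suminf, simp)
  also have "\<dots> = (\<Sum>i. ennreal (\<Sum>pr\<in>F i. f pr))"
    using finite nonneg by (simp add: nn_integral_indicator_finite sum_ennreal)
  also have "\<dots> = ennreal (\<Sum>i. \<Sum>pr\<in>F i. f pr)"
    by (rule suminf_ennreal2[OF _ summable]) (simp add: nonneg sum_nonneg)
  finally show "(\<Sum>j. ennreal (f (prod_decode j))) \<noteq> \<top>" by simp
qed (use nonneg in simp)

lemma (in prob_space) AE_finite_occurrences_by_blocks:
  fixes E :: "nat \<times> nat \<Rightarrow> 'a set" and F :: "nat \<Rightarrow> (nat \<times> nat) set"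
  assumes events: "\<And>pr. E pr \<in> events" and "\<And>i. finite (F i)" "disjoint_family F"
    and "\<And>pr. prob (E pr) \<noteq> 0 \<Longrightarrow> \<exists>i. pr \<in> F i"
    and "summable (\<lambda>i. \<Sum>pr\<in>F i. prob (E pr))"
  shows "AE \<omega> in M. finite {pr. \<omega> \<in> E pr}"
proof -
  have "summable (\<lambda>j. prob (E (prod_decode j)))"
    by (rule summable_prod_decode_by_blocks) (use assms in auto)
  then have "AE \<omega> in M. eventually (\<lambda>j. \<omega> \<in> space M - E (prod_decode j)) sequentially"
    using events by (intro borel_cantelli_AE1) (auto simp: emeasure_eq_measure)
  then show ?thesis
  proof (rule eventually_mono)
    fix \<omega> assume "eventually (\<lambda>j. \<omega> \<in> space M - E (prod_decode j)) sequentially"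
    then obtain J where J: "\<And>j. J \<le> j \<Longrightarrow> \<omega> \<notin> E (prod_decode j)"
      by (auto simp: eventually_sequentially)
    have "{pr. \<omega> \<in> E pr} \<subseteq> prod_decode ` {..<J}"
    proof
      fix pr assume "pr \<in> {pr. \<omega> \<in> E pr}"
      then have "\<not> J \<le> prod_encode pr" using J[of "prod_encode pr"] by auto
      then have "prod_encode pr < J" by simp
      then show "pr \<in> prod_decode ` {..<J}" by (auto intro: image_eqI[of _ _ "prod_encode pr"])
    qed
    then show "finite {pr. \<omega> \<in> E pr}" by (rule finite_subset) simp
  qed
qed

lemma AE_all_pos_by_mono:
  fixes P :: "real \<Rightarrow> 'a \<Rightarrow> bool"
  assumes "0 < \<epsilon>\<^sub>0" and AE: "\<And>\<epsilon>. 0 < \<epsilon> \<Longrightarrow> \<epsilon> \<le> \<epsilon>\<^sub>0 \<Longrightarrow> AE \<omega> in M. P \<epsilon> \<omega>"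
    and mono: "\<And>\<epsilon> \<epsilon>' \<omega>. 0 < \<epsilon> \<Longrightarrow> \<epsilon> \<le> \<epsilon>' \<Longrightarrow> P \<epsilon> \<omega> \<Longrightarrow> P \<epsilon>' \<omega>"
  shows "AE \<omega> in M. \<forall>\<epsilon>>0. P \<epsilon> \<omega>"
proof -
  have pos: "0 < \<epsilon>\<^sub>0 / (real i + 1)" for i :: nat
    using assms(1) by simp
  have "\<epsilon>\<^sub>0 / (real i + 1) \<le> \<epsilon>\<^sub>0 / 1" for i :: nat
    using assms(1) by (intro divide_left_mono) auto
  then have "AE \<omega> in M. \<forall>i::nat. P (\<epsilon>\<^sub>0 / (real i + 1)) \<omega>"
    using pos by (subst AE_all_countable) (auto intro: AE)
  then show ?thesis
  proof (rule eventually_mono, intro allI impI)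
    fix \<omega> and \<epsilon> :: real assume all: "\<forall>i::nat. P (\<epsilon>\<^sub>0 / (real i + 1)) \<omega>" and "0 < \<epsilon>"
    obtain i :: nat where "\<epsilon>\<^sub>0 / \<epsilon> < real i" using reals_Archimedean2 by blast
    then have "\<epsilon>\<^sub>0 < real i * \<epsilon>" using \<open>0 < \<epsilon>\<close> by (simp add: pos_divide_less_eq)
    moreover have "real i * \<epsilon> \<le> \<epsilon> * (real i + 1)" using \<open>0 < \<epsilon>\<close> by (simp add: algebra_simps)
    ultimately have "\<epsilon>\<^sub>0 / (real i + 1) \<le> \<epsilon>" by (simp add: pos_divide_le_eq)
    then show "P \<epsilon> \<omega>" by (rule mono[OF pos[of i] _ all[rule_format, of i]])
  qed
qed

section \<open>Maxima over growing rectangles\<close>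

lemma finite_pairs_bounded:
  fixes S :: "(nat \<times> nat) set"
  assumes "finite S" obtains Z where "S \<subseteq> {..<Z} \<times> {..<Z}"
proof -
  obtain Z where "fst ` S \<union> snd ` S \<subseteq> {..<Z}"
    using finite_nat_bounded[of "fst ` S \<union> snd ` S"] assms by auto
  then have "S \<subseteq> {..<Z} \<times> {..<Z}" by force
  then show ?thesis by (rule that)
qed

lemma rectangle_values_eq:
  "{x k n | k n. k \<in> {1..m} \<and> n \<in> {1..j}} = (\<lambda>(k, n). x k n) ` ({1..m} \<times> {1..j})"
  by auto blast

lemma eventually_Max_rectangle_le:
  fixes x :: "nat \<Rightarrow> nat \<Rightarrow> real" and a :: "real \<Rightarrow> real"
  assumes a_mono: "mono_on {0..} a" and a_top: "filterlim a at_top at_top"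
    and finite: "finite {(k, n). 1 \<le> k \<and> 1 \<le> n \<and> a (ln (real (k * n))) + \<epsilon> < x k n}"
  shows "\<exists>N. \<forall>m j. 1 \<le> m \<longrightarrow> 1 \<le> j \<longrightarrow> N \<le> max m j \<longrightarrow>
           Max {x k n | k n. k \<in> {1..m} \<and> n \<in> {1..j}} \<le> a (ln (real (m * j))) + \<epsilon>"
proof -
  obtain Z where Z: "{(k, n). 1 \<le> k \<and> 1 \<le> n \<and> a (ln (real (k * n))) + \<epsilon> < x k n} \<subseteq> {..<Z} \<times> {..<Z}"
    using finite_pairs_bounded[OF finite] .
  define B where "B = Max ((\<lambda>(k, n). x k n) ` ({..<Z} \<times> {..<Z}))"
  obtain L\<^sub>1 where L\<^sub>1: "\<And>L. L\<^sub>1 \<le> L \<Longrightarrow> B - \<epsilon> \<le> a L"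
    using a_top unfolding filterlim_at_top eventually_at_top_linorder by blast
  show ?thesis
  proof (intro exI[of _ "nat \<lceil>exp L\<^sub>1\<rceil>"] allI impI)
    fix m j :: nat assume mj: "1 \<le> m" "1 \<le> j" "nat \<lceil>exp L\<^sub>1\<rceil> \<le> max m j"
    have "max m j \<le> m * j" using mj(1,2) mult_le_mono2[of 1 j m] mult_le_mono1[of 1 m j] by simp
    then have "real (nat \<lceil>exp L\<^sub>1\<rceil>) \<le> real (m * j)" using mj(3) by linarith
    then have "exp L\<^sub>1 \<le> real (m * j)" using real_nat_ceiling_ge[of "exp L\<^sub>1"] by linarith
    then have "L\<^sub>1 \<le> ln (real (m * j))" using mj by (simp add: ln_ge_iff)
    have "x k n \<le> a (ln (real (m * j))) + \<epsilon>" if "k \<in> {1..m}" "n \<in> {1..j}" for k n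
    proof (cases "a (ln (real (k * n))) + \<epsilon> < x k n")
      case True
      then have "k < Z" "n < Z" using Z that by auto
      then have "x k n \<le> B" unfolding B_def by (intro Max_ge) auto
      then show ?thesis using L\<^sub>1[OF \<open>L\<^sub>1 \<le> ln (real (m * j))\<close>] by simp
    next
      case False
      have "1 \<le> k * n" "k * n \<le> m * j" using that by (auto intro: mult_le_mono)
      then have "1 \<le> real (k * n)" "real (k * n) \<le> real (m * j)" by (simp_all del: of_nat_mult)
      then have "0 \<le> ln (real (k * n))" "ln (real (k * n)) \<le> ln (real (m * j))"
        by (auto intro: ln_mono simp del: of_nat_mult)
      then have "a (ln (real (k * n))) \<le> a (ln (real (m * j)))"
        by (intro mono_onD[OF a_mono]) auto
      then show ?thesis using False by simp
    qed
    then show "Max {x k n | k n. k \<in> {1..m} \<and> n \<in> {1..j}} \<le> a (ln (real (m * j))) + \<epsilon>"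
      using mj unfolding rectangle_values_eq by (subst Max_le_iff) auto
  qed
qed

lemma eventually_Max_rectangle_ge:
  fixes x :: "nat \<Rightarrow> nat \<Rightarrow> real" and b :: "nat \<Rightarrow> nat \<Rightarrow> real"
  assumes finite: "finite {(m, j). 1 \<le> m \<and> 1 \<le> j \<and> (\<forall>k\<in>{1..m}. \<forall>n\<in>{1..j}. x k n < b m j)}"
  shows "\<exists>N. \<forall>m j. 1 \<le> m \<longrightarrow> 1 \<le> j \<longrightarrow> N \<le> max m j \<longrightarrow>
           b m j \<le> Max {x k n | k n. k \<in> {1..m} \<and> n \<in> {1..j}}"
proof -
  obtain Z where Z: "{(m, j). 1 \<le> m \<and> 1 \<le> j \<and> (\<forall>k\<in>{1..m}. \<forall>n\<in>{1..j}. x k n < b m j)} \<subseteq> {..<Z} \<times> {..<Z}"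
    using finite_pairs_bounded[OF finite] .
  show ?thesis
  proof (intro exI[of _ Z] allI impI)
    fix m j :: nat assume mj: "1 \<le> m" "1 \<le> j" "Z \<le> max m j"
    have "(m, j) \<notin> {(m, j). 1 \<le> m \<and> 1 \<le> j \<and> (\<forall>k\<in>{1..m}. \<forall>n\<in>{1..j}. x k n < b m j)}"
    proof
      assume "(m, j) \<in> {(m, j). 1 \<le> m \<and> 1 \<le> j \<and> (\<forall>k\<in>{1..m}. \<forall>n\<in>{1..j}. x k n < b m j)}"
      then have "max m j < Z" using Z by (auto simp: max_def)
      then show False using mj(3) by linarith
    qed
    then obtain k n where kn: "k \<in> {1..m}" "n \<in> {1..j}" "b m j \<le> x k n"
      using mj(1,2) by (auto simp: not_less)
    then have "x k n \<in> (\<lambda>(k, n). x k n) ` ({1..m} \<times> {1..j})" by force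
    then have "x k n \<le> Max ((\<lambda>(k, n). x k n) ` ({1..m} \<times> {1..j}))" by (intro Max_ge) auto
    then show "b m j \<le> Max {x k n | k n. k \<in> {1..m} \<and> n \<in> {1..j}}"
      unfolding rectangle_values_eq using kn(3) by linarith
  qed
qed

lemma double_lim_Max_rectangle:
  fixes x :: "nat \<Rightarrow> nat \<Rightarrow> real" and a :: "real \<Rightarrow> real"
  assumes a_mono: "mono_on {0..} a" and a_top: "filterlim a at_top at_top"
    and upper: "\<And>\<epsilon>. 0 < \<epsilon> \<Longrightarrow> finite {(k, n). 1 \<le> k \<and> 1 \<le> n \<and> a (ln (real (k * n))) + \<epsilon> < x k n}"
    and lower: "\<And>\<epsilon>. 0 < \<epsilon> \<Longrightarrow>
      finite {(m, j). 1 \<le> m \<and> 1 \<le> j \<and> (\<forall>k\<in>{1..m}. \<forall>n\<in>{1..j}. x k n < a (ln (real (m * j))) - \<epsilon>)}"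
  shows "double_lim (\<lambda>m j. Max {x k n | k n. k \<in> {1..m} \<and> n \<in> {1..j}} - a (ln (real (m * j)))) 0"
  unfolding double_lim_def
proof (intro allI impI)
  fix e :: real assume "0 < e"
  then have "0 < e / 2" by simp
  obtain N\<^sub>1 where N\<^sub>1: "\<And>m j. 1 \<le> m \<Longrightarrow> 1 \<le> j \<Longrightarrow> N\<^sub>1 \<le> max m j \<Longrightarrow>
      Max {x k n | k n. k \<in> {1..m} \<and> n \<in> {1..j}} \<le> a (ln (real (m * j))) + e / 2"
    using eventually_Max_rectangle_le[OF a_mono a_top upper[OF \<open>0 < e / 2\<close>]] by blast
  obtain N\<^sub>2 where N\<^sub>2: "\<And>m j. 1 \<le> m \<Longrightarrow> 1 \<le> j \<Longrightarrow> N\<^sub>2 \<le> max m j \<Longrightarrow>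
      a (ln (real (m * j))) - e / 2 \<le> Max {x k n | k n. k \<in> {1..m} \<and> n \<in> {1..j}}"
    using eventually_Max_rectangle_ge[OF lower[OF \<open>0 < e / 2\<close>]] by blast
  show "\<exists>N. \<forall>m j. 1 \<le> m \<longrightarrow> 1 \<le> j \<longrightarrow> N \<le> max m j \<longrightarrow>
      \<bar>Max {x k n | k n. k \<in> {1..m} \<and> n \<in> {1..j}} - a (ln (real (m * j))) - 0\<bar> < e"
  proof (intro exI[of _ "max N\<^sub>1 N\<^sub>2"] allI impI)
    fix m j :: nat assume mj: "1 \<le> m" "1 \<le> j" "max N\<^sub>1 N\<^sub>2 \<le> max m j"
    then have "N\<^sub>1 \<le> max m j" "N\<^sub>2 \<le> max m j" by auto
    then show "\<bar>Max {x k n | k n. k \<in> {1..m} \<and> n \<in> {1..j}} - a (ln (real (m * j))) - 0\<bar> < e"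
      using N\<^sub>1[OF mj(1,2)] N\<^sub>2[OF mj(1,2)] \<open>0 < e\<close> unfolding abs_less_iff by linarith
  qed
qed

lemma AE_double_lim_Max_rectangle:
  fixes X :: "nat \<Rightarrow> nat \<Rightarrow> 'a \<Rightarrow> real" and a :: "real \<Rightarrow> real"
  assumes a_mono: "mono_on {0..} a" and a_top: "filterlim a at_top at_top" and "0 < \<epsilon>\<^sub>0"
    and upper: "\<And>\<epsilon>. 0 < \<epsilon> \<Longrightarrow> \<epsilon> \<le> \<epsilon>\<^sub>0 \<Longrightarrow>
      AE \<omega> in M. finite {(k, n). 1 \<le> k \<and> 1 \<le> n \<and> a (ln (real (k * n))) + \<epsilon> < X k n \<omega>}"
    and lower: "\<And>\<epsilon>. 0 < \<epsilon> \<Longrightarrow> \<epsilon> \<le> \<epsilon>\<^sub>0 \<Longrightarrow> AE \<omega> in M.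
      finite {(m, j). 1 \<le> m \<and> 1 \<le> j \<and> (\<forall>k\<in>{1..m}. \<forall>n\<in>{1..j}. X k n \<omega> < a (ln (real (m * j))) - \<epsilon>)}"
  shows "AE \<omega> in M. double_lim
    (\<lambda>m j. Max {X k n \<omega> | k n. k \<in> {1..m} \<and> n \<in> {1..j}} - a (ln (real (m * j)))) 0"
proof -
  define U where "U \<epsilon> \<omega> = {(k, n). 1 \<le> k \<and> 1 \<le> n \<and> a (ln (real (k * n))) + \<epsilon> < X k n \<omega>}" for \<epsilon> \<omega>
  define D where "D \<epsilon> \<omega> = {(m, j). 1 \<le> m \<and> 1 \<le> j \<and>
    (\<forall>k\<in>{1..m}. \<forall>n\<in>{1..j}. X k n \<omega> < a (ln (real (m * j))) - \<epsilon>)}" for \<epsilon> \<omega>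
  have "AE \<omega> in M. \<forall>\<epsilon>>0. finite (U \<epsilon> \<omega>) \<and> finite (D \<epsilon> \<omega>)"
  proof (rule AE_all_pos_by_mono[OF \<open>0 < \<epsilon>\<^sub>0\<close>])
    show "AE \<omega> in M. finite (U \<epsilon> \<omega>) \<and> finite (D \<epsilon> \<omega>)" if "0 < \<epsilon>" "\<epsilon> \<le> \<epsilon>\<^sub>0" for \<epsilon>
      using upper[OF that] lower[OF that] unfolding U_def D_def by (rule AE_conjI)
    show "finite (U \<epsilon>' \<omega>) \<and> finite (D \<epsilon>' \<omega>)"
      if "0 < \<epsilon>" "\<epsilon> \<le> \<epsilon>'" "finite (U \<epsilon> \<omega>) \<and> finite (D \<epsilon> \<omega>)" for \<epsilon> \<epsilon>' \<omega>
    proof -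
      have "U \<epsilon>' \<omega> \<subseteq> U \<epsilon> \<omega>" "D \<epsilon>' \<omega> \<subseteq> D \<epsilon> \<omega>"
        using that(2) unfolding U_def D_def by fastforce+
      then show ?thesis using that(3) finite_subset by blast
    qed
  qed
  then show ?thesis
  proof (rule eventually_mono)
    fix \<omega> assume "\<forall>\<epsilon>>0. finite (U \<epsilon> \<omega>) \<and> finite (D \<epsilon> \<omega>)"
    then show "double_lim (\<lambda>m j. Max {X k n \<omega> | k n. k \<in> {1..m} \<and> n \<in> {1..j}} - a (ln (real (m * j)))) 0"
      unfolding U_def D_def by (intro double_lim_Max_rectangle[OF a_mono a_top]) auto
  qed
qed

section \<open>Orlicz N-functions and their Young--Fenchel transforms\<close>

locale orlicz =
  fixes \<phi> p :: "real \<Rightarrow> real"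
  assumes N_function: "orlicz_N_function \<phi>" and density: "orlicz_density \<phi> p"
begin

abbreviation \<psi> :: "real \<Rightarrow> real" where "\<psi> \<equiv> young_fenchel \<phi>"
abbreviation q :: "real \<Rightarrow> real" where "q \<equiv> gen_inverse p"

lemma phi_even: "\<phi> (- x) = \<phi> x"
  and phi_zero: "\<phi> 0 = 0"
  and phi_continuous: "continuous_on UNIV \<phi>"
  and phi_convex: "convex_on UNIV \<phi>"
  and phi_strict_mono: "strict_mono_on {0<..} \<phi>"
  and phi_div_tendsto_zero: "((\<lambda>x. \<phi> x / x) \<longlongrightarrow> 0) (at_right 0)"
  and phi_div_at_top: "filterlim (\<lambda>x. \<phi> x / x) at_top at_top"
  using N_function by (simp_all add: orlicz_N_function_def)

lemma p_mono: "0 \<le> x \<Longrightarrow> x \<le> y \<Longrightarrow> p x \<le> p y"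
  using density unfolding orlicz_density_def mono_on_def by auto

lemma phi_nonneg: "\<phi> x \<ge> 0"
proof -
  have "\<phi> ((1 - 1/2) *\<^sub>R x + (1/2) *\<^sub>R (-x)) \<le> (1 - 1/2) * \<phi> x + (1/2) * \<phi> (-x)"
    by (rule convex_onD[OF phi_convex]) auto
  then show ?thesis using phi_zero phi_even by simp
qed

lemma phi_abs_mono:
  assumes "\<bar>x\<bar> \<le> \<bar>y\<bar>" shows "\<phi> x \<le> \<phi> y"
proof -
  have phi_abs: "\<phi> \<bar>z\<bar> = \<phi> z" for z
    by (cases "z \<ge> 0") (auto simp: phi_even)
  have "\<phi> \<bar>x\<bar> \<le> \<phi> \<bar>y\<bar>"
  proof (cases "x = 0 \<or> \<bar>x\<bar> = \<bar>y\<bar>")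
    case True then show ?thesis using phi_zero phi_nonneg by auto
  next
    case False then show ?thesis
      using assms by (intro less_imp_le strict_mono_onD[OF phi_strict_mono]) auto
  qed
  then show ?thesis by (simp add: phi_abs)
qed

lemma p_integrable_on:
  assumes "0 \<le> a" "a \<le> b" shows "p integrable_on {a..b}"
proof -
  have "p integrable_on {0..\<bar>b\<bar>}" using density by (simp add: orlicz_density_def)
  then have "p integrable_on {0..b}" using assms by simp
  then show ?thesis by (rule integrable_subinterval_real) (use assms in auto)
qed

lemma phi_diff_eq_integral:
  assumes "0 \<le> a" "a \<le> b" shows "\<phi> b - \<phi> a = integral {a..b} p"
proof -
  have "\<phi> x = integral {0..\<bar>x\<bar>} p" for x
    using density by (simp add: orlicz_density_def)
  then have "\<phi> a = integral {0..a} p" "\<phi> b = integral {0..b} p"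
    using assms by simp_all
  moreover have "integral {0..a} p + integral {a..b} p = integral {0..b} p"
    using assms p_integrable_on[of 0 b] by (intro Henstock_Kurzweil_Integration.integral_combine) auto
  ultimately show ?thesis by linarith
qed

lemma phi_diff_ge:
  assumes "0 \<le> a" "a \<le> b" "\<And>t. a < t \<Longrightarrow> t < b \<Longrightarrow> c \<le> p t"
  shows "c * (b - a) \<le> \<phi> b - \<phi> a"
proof -
  have "integral {a<..<b} (\<lambda>_. c) \<le> integral {a<..<b} p"
    using assms p_integrable_on[of a b]
    by (intro integral_le) (auto simp: integrable_on_open_interval_real)
  then have "(b - a) * c \<le> integral {a..b} p"
    using assms(2) by (simp add: integral_open_interval_real[symmetric])
  then show ?thesis using phi_diff_eq_integral[OF assms(1,2)] by (simp add: mult.commute)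
qed

lemma phi_diff_le:
  assumes "0 \<le> a" "a \<le> b" "\<And>t. a < t \<Longrightarrow> t < b \<Longrightarrow> p t \<le> c"
  shows "\<phi> b - \<phi> a \<le> c * (b - a)"
proof -
  have "integral {a<..<b} p \<le> integral {a<..<b} (\<lambda>_. c)"
    using assms p_integrable_on[of a b]
    by (intro integral_le) (auto simp: integrable_on_open_interval_real)
  then have "integral {a..b} p \<le> (b - a) * c"
    using assms(2) by (simp add: integral_open_interval_real[symmetric])
  then show ?thesis using phi_diff_eq_integral[OF assms(1,2)] by (simp add: mult.commute)
qed

lemma p_zero_nonpos: "p 0 \<le> 0"
proof (rule ccontr)
  assume pos: "\<not> p 0 \<le> 0"
  have "eventually (\<lambda>x. p 0 \<le> \<phi> x / x) (at_right 0)"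
  proof (rule eventually_at_rightI[of 0 1])
    fix x :: real assume x: "x \<in> {0<..<1}"
    then have "p 0 * (x - 0) \<le> \<phi> x - \<phi> 0" by (intro phi_diff_ge) (auto intro: p_mono)
    then show "p 0 \<le> \<phi> x / x" using x phi_zero by (simp add: field_simps)
  qed simp
  then have "p 0 \<le> 0"
    using phi_div_tendsto_zero by (intro tendsto_lowerbound[of _ 0 "at_right 0"]) auto
  with pos show False by simp
qed

lemma bdd_above_sublevel: "bdd_above {u. u \<ge> 0 \<and> p u \<le> x}"
proof (rule ccontr)
  assume "\<not> ?thesis"
  then have unbdd: "\<forall>M. \<exists>u\<in>{u. u \<ge> 0 \<and> p u \<le> x}. M < u"
    unfolding bdd_above_def by (simp add: not_le)
  have p_le: "p t \<le> x" if "t \<ge> 0" for t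
  proof -
    obtain u where "u \<ge> 0" "p u \<le> x" "u > t" using unbdd by blast
    then show ?thesis using that p_mono[of t u] by simp
  qed
  have "eventually (\<lambda>y. \<phi> y / y \<le> \<bar>x\<bar>) at_top"
  proof (rule eventually_at_top_linorderI[of 1])
    fix y :: real assume y: "y \<ge> 1"
    then have "\<phi> y - \<phi> 0 \<le> x * (y - 0)" by (intro phi_diff_le) (auto intro: p_le)
    moreover have "x * y \<le> \<bar>x\<bar> * y" using y by (intro mult_right_mono) auto
    ultimately have "\<phi> y \<le> \<bar>x\<bar> * y" using phi_zero by simp
    then show "\<phi> y / y \<le> \<bar>x\<bar>" using y by (simp add: pos_divide_le_eq)
  qed
  moreover have "eventually (\<lambda>y. \<phi> y / y > \<bar>x\<bar>) at_top"
    using phi_div_at_top by (simp add: filterlim_at_top_dense)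
  ultimately have "eventually (\<lambda>_. False) (at_top :: real filter)"
    by eventually_elim simp
  then show False by simp
qed

lemma sublevel_nonempty:
  assumes "x \<ge> 0" shows "{u. u \<ge> 0 \<and> p u \<le> x} \<noteq> {}"
proof -
  have "0 \<in> {u. u \<ge> 0 \<and> p u \<le> x}" using assms p_zero_nonpos by simp
  then show ?thesis by blast
qed

lemma q_upper:
  assumes "0 \<le> u" "p u \<le> x" shows "u \<le> q x"
  unfolding gen_inverse_def by (rule cSup_upper[OF _ bdd_above_sublevel]) (use assms in simp)

lemma q_nonneg: "x \<ge> 0 \<Longrightarrow> q x \<ge> 0"
  using q_upper[of 0 x] p_zero_nonpos by simp

lemma q_mono:
  assumes "0 \<le> x" "x \<le> y" shows "q x \<le> q y"
  unfolding gen_inverse_def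
proof (rule cSup_subset_mono[OF sublevel_nonempty bdd_above_sublevel])
  show "{u. u \<ge> 0 \<and> p u \<le> x} \<subseteq> {u. u \<ge> 0 \<and> p u \<le> y}" using assms by auto
qed (use assms in simp)

lemma p_gt_of_gt_q:
  assumes "x \<ge> 0" "t > q x" shows "p t > x"
proof (rule ccontr)
  assume "\<not> p t > x"
  moreover have "t \<ge> 0" using q_nonneg[of x] assms by simp
  ultimately have "t \<le> q x" by (intro q_upper) auto
  with assms show False by simp
qed

lemma p_le_of_lt_q:
  assumes "x \<ge> 0" "0 \<le> t" "t < q x" shows "p t \<le> x"
proof -
  have "\<exists>u\<in>{u. u \<ge> 0 \<and> p u \<le> x}. t < u"
    by (rule less_cSupD[OF sublevel_nonempty]) (use assms in \<open>simp_all add: gen_inverse_def\<close>)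
  then obtain u where "p u \<le> x" "t < u" by blast
  then show ?thesis using p_mono[of t u] assms by simp
qed

text \<open>The line of slope \<open>x\<close> through \<open>(q x, \<phi> (q x))\<close> supports \<open>\<phi>\<close>, because \<open>p \<le> x\<close> left of \<open>q x\<close>
  and \<open>p \<ge> x\<close> right of it.\<close>

lemma phi_supporting_line:
  assumes x: "x \<ge> 0" shows "\<phi> (q x) + x * (w - q x) \<le> \<phi> w"
proof -
  have q0: "q x \<ge> 0" using q_nonneg x .
  have nonneg: "\<phi> (q x) + x * (w - q x) \<le> \<phi> w" if "w \<ge> 0" for w
  proof (cases "w \<ge> q x")
    case True
    then have "x * (w - q x) \<le> \<phi> w - \<phi> (q x)"
      using q0 by (intro phi_diff_ge) (auto intro: less_imp_le p_gt_of_gt_q[OF x])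
    then show ?thesis by simp
  next
    case False
    then have "\<phi> (q x) - \<phi> w \<le> x * (q x - w)"
      using that by (intro phi_diff_le) (auto intro: p_le_of_lt_q[OF x])
    then show ?thesis by (simp add: algebra_simps)
  qed
  show ?thesis
  proof (cases "w \<ge> 0")
    case False
    have "x * (w - q x) \<le> x * (- w - q x)" using False x by (intro mult_left_mono) auto
    then show ?thesis using nonneg[of "- w"] False phi_even by simp
  qed (use nonneg in simp)
qed

lemma psi_eq:
  assumes "x \<ge> 0" shows "\<psi> x = x * q x - \<phi> (q x)"
  unfolding young_fenchel_def
proof (rule cSup_eq_maximum)
  show "\<And>z. z \<in> range (\<lambda>y. x * y - \<phi> y) \<Longrightarrow> z \<le> x * q x - \<phi> (q x)"
    using phi_supporting_line[OF assms] by (auto simp: algebra_simps)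
qed auto

lemma young_inequality: "x \<ge> 0 \<Longrightarrow> x * y - \<phi> y \<le> \<psi> x"
  using phi_supporting_line[of x y] psi_eq[of x] by (simp add: algebra_simps)

lemma psi_supporting_line: "x \<ge> 0 \<Longrightarrow> y \<ge> 0 \<Longrightarrow> \<psi> x + (y - x) * q x \<le> \<psi> y"
  using young_inequality[of y "q x"] psi_eq[of x] by (simp add: algebra_simps)

lemma psi_diff_le: "0 \<le> x \<Longrightarrow> x \<le> y \<Longrightarrow> \<psi> y - \<psi> x \<le> (y - x) * q y"
  using psi_supporting_line[of y x] by (simp add: algebra_simps)

lemma q_zero: "q 0 = 0"
proof (rule ccontr)
  assume "q 0 \<noteq> 0"
  then have pos: "q 0 > 0" using q_nonneg[of 0] by simp
  have "\<phi> (q 0) \<le> 0" using phi_supporting_line[of 0 0] phi_zero by simp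
  moreover have "\<phi> (q 0 / 2) < \<phi> (q 0)"
    using pos by (intro strict_mono_onD[OF phi_strict_mono]) auto
  ultimately show False using phi_nonneg[of "q 0 / 2"] by simp
qed

lemma psi_zero: "\<psi> 0 = 0"
  using psi_eq[of 0] q_zero phi_zero by simp

lemma q_pos:
  assumes "x > 0" shows "q x > 0"
proof -
  obtain b where b: "b > 0" "\<And>y. 0 < y \<Longrightarrow> y < b \<Longrightarrow> \<phi> y / y < x / 2"
    using order_tendstoD(2)[OF phi_div_tendsto_zero, of "x / 2"] assms
    unfolding eventually_at_right_field by auto
  define u where "u = b / 2"
  have u: "u > 0" "u < b" using b by (auto simp: u_def)
  then have "\<phi> u / u < x / 2" using b(2) by blast
  have "p (u / 2) * (u - u / 2) \<le> \<phi> u - \<phi> (u / 2)"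
    using u by (intro phi_diff_ge) (auto intro: p_mono)
  then have "p (u / 2) * (u / 2) \<le> \<phi> u" using phi_nonneg[of "u / 2"] by simp
  then have "p (u / 2) \<le> 2 * (\<phi> u / u)" using u by (simp add: field_simps)
  with \<open>\<phi> u / u < x / 2\<close> have "p (u / 2) \<le> x" by linarith
  then have "u / 2 \<le> q x" using u by (intro q_upper) auto
  then show ?thesis using u by simp
qed

lemma psi_mono:
  assumes "0 \<le> x" "x \<le> y" shows "\<psi> x \<le> \<psi> y"
proof -
  have "(y - x) * q x \<ge> 0" using assms q_nonneg[of x] by simp
  then show ?thesis using psi_supporting_line[of x y] assms by linarith
qed

lemma psi_nonneg: "x \<ge> 0 \<Longrightarrow> \<psi> x \<ge> 0"
  using psi_mono[of 0 x] psi_zero by simp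

lemma psi_strict_mono:
  assumes "0 \<le> x" "x < y" shows "\<psi> x < \<psi> y"
proof -
  define z where "z = (x + y) / 2"
  have "\<psi> x \<le> \<psi> z" "\<psi> z + (y - z) * q z \<le> \<psi> y"
    using assms by (auto simp: z_def intro: psi_mono psi_supporting_line)
  moreover have "(y - z) * q z > 0" using assms q_pos[of z] by (simp add: z_def)
  ultimately show ?thesis by linarith
qed

lemma psi_lipschitz_on: "b \<ge> 0 \<Longrightarrow> (q b)-lipschitz_on {0..b} \<psi>"
proof (intro lipschitz_onI)
  fix x y assume xy: "x \<in> {0..b}" "y \<in> {0..b}"
  have ordered: "\<bar>\<psi> y - \<psi> x\<bar> \<le> q b * (y - x)" if "0 \<le> x" "x \<le> y" "y \<le> b" for x y
    using psi_diff_le[of x y] psi_mono[of x y] q_mono[of y b] that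
    by (smt (verit) mult.commute mult_left_mono)
  show "dist (\<psi> x) (\<psi> y) \<le> q b * dist x y"
  proof (cases "x \<le> y")
    case True then show ?thesis using ordered[of x y] xy by (simp add: dist_real_def abs_minus_commute)
  next
    case False then show ?thesis using ordered[of y x] xy by (simp add: dist_real_def)
  qed
qed (use q_nonneg in simp)

lemma psi_surj:
  assumes "L \<ge> 0" shows "\<exists>x\<ge>0. \<psi> x = L"
proof -
  define b where "b = 1 + L / q 1"
  have q1: "q 1 > 0" by (rule q_pos) simp
  have "\<psi> 1 + (b - 1) * q 1 \<le> \<psi> b" using assms q1 by (intro psi_supporting_line) (auto simp: b_def)
  then have "L \<le> \<psi> b" using psi_nonneg[of 1] q1 by (simp add: b_def)
  moreover have "continuous_on {0..b} \<psi>"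
    using assms q1 by (intro lipschitz_on_continuous_on[OF psi_lipschitz_on]) (auto simp: b_def)
  ultimately show ?thesis
    using IVT'[of \<psi> 0 L b] assms q1 psi_zero by (auto simp: b_def)
qed

lemma inj_on_psi: "inj_on \<psi> {0..}"
  by (rule linorder_inj_onI') (use psi_strict_mono in fastforce)

lemma inv_psi:
  assumes "L \<ge> 0" shows "inv_pos \<psi> L \<ge> 0" "\<psi> (inv_pos \<psi> L) = L"
proof -
  have "L \<in> \<psi> ` {0..}" using psi_surj[OF assms] by auto
  then show "inv_pos \<psi> L \<ge> 0" "\<psi> (inv_pos \<psi> L) = L"
    unfolding inv_pos_def using the_inv_into_into[OF inj_on_psi] f_the_inv_into_f[OF inj_on_psi]
    by auto
qed

lemma inv_psi_psi: "x \<ge> 0 \<Longrightarrow> inv_pos \<psi> (\<psi> x) = x"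
  unfolding inv_pos_def by (auto intro: the_inv_into_f_f[OF inj_on_psi])

lemma inv_psi_mono:
  assumes "0 \<le> L" "L \<le> L'" shows "inv_pos \<psi> L \<le> inv_pos \<psi> L'"
  using psi_strict_mono[of "inv_pos \<psi> L'" "inv_pos \<psi> L"] inv_psi[of L] inv_psi[of L'] assms
  by force

lemma inv_psi_pos: "L > 0 \<Longrightarrow> inv_pos \<psi> L > 0"
  using inv_psi[of L] psi_zero by (cases "inv_pos \<psi> L = 0") auto

lemma filterlim_inv_psi_at_top: "filterlim (inv_pos \<psi>) at_top at_top"
  unfolding filterlim_at_top
proof (intro allI eventually_at_top_linorderI)
  fix B L :: real assume "\<psi> (max B 0) \<le> L"
  then show "B \<le> inv_pos \<psi> L"
    using inv_psi_mono[of "\<psi> (max B 0)" L] inv_psi_psi[of "max B 0"] psi_nonneg[of "max B 0"] by simp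
qed

lemma mgf_bound_tau:
  assumes subg: "phi_subgaussian M \<phi> X" and tau: "tau_phi M \<phi> X \<le> b" and b: "0 < b"
  shows "mgf_bound M \<phi> X b"
proof -
  have above: "mgf_bound M \<phi> X a'" if "b < a'" for a'
  proof -
    have "{a. a > 0 \<and> mgf_bound M \<phi> X a} \<noteq> {}" using subg by (auto simp: phi_subgaussian_def)
    moreover have "Inf {a. a > 0 \<and> mgf_bound M \<phi> X a} < a'"
      using tau that unfolding tau_phi_def by linarith
    ultimately have "\<exists>a\<in>{a. a > 0 \<and> mgf_bound M \<phi> X a}. a < a'" by (rule cInf_lessD)
    then obtain a where a: "0 < a" "mgf_bound M \<phi> X a" "a < a'" by blast
    have "\<phi> (a * t) \<le> \<phi> (a' * t)" for t
      using a by (intro phi_abs_mono) (auto simp: abs_mult intro!: mult_right_mono)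
    then show ?thesis
      using a(2) unfolding mgf_bound_def by (meson exp_le_cancel_iff order_trans)
  qed
  show ?thesis
    unfolding mgf_bound_def
  proof (intro allI conjI)
    fix t
    show "integrable M (\<lambda>\<omega>. exp (t * X \<omega>))"
      using above[of "b + 1"] by (simp add: mgf_bound_def)
  next
    fix t
    have "isCont \<phi> (b * t)" using phi_continuous by (simp add: continuous_on_eq_continuous_at)
    moreover have "((\<lambda>a'. a' * t) \<longlongrightarrow> b * t) (at_right b)" by (intro tendsto_intros)
    ultimately have "((\<lambda>a'. \<phi> (a' * t)) \<longlongrightarrow> \<phi> (b * t)) (at_right b)"
      by (rule isCont_tendsto_compose)
    then have "((\<lambda>a'. exp (\<phi> (a' * t))) \<longlongrightarrow> exp (\<phi> (b * t))) (at_right b)"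
      by (rule tendsto_exp)
    moreover have "eventually (\<lambda>a'. (\<integral>\<omega>. exp (t * X \<omega>) \<partial>M) \<le> exp (\<phi> (a' * t))) (at_right b)"
      using above by (intro eventually_at_rightI[of b "b + 1"]) (auto simp: mgf_bound_def)
    ultimately show "(\<integral>\<omega>. exp (t * X \<omega>) \<partial>M) \<le> exp (\<phi> (b * t))"
      by (rule tendsto_lowerbound) simp
  qed
qed

text \<open>The exponential moment is taken at \<open>q x / b\<close>, where Young's inequality is sharp.\<close>

lemma chernoff_bound:
  assumes "prob_space M" and X: "X \<in> borel_measurable M" and mgf: "mgf_bound M \<phi> X b"
    and b: "0 < b" and x: "0 < x" and \<delta>: "0 \<le> \<delta>"
  shows "measure M {\<omega> \<in> space M. b * (x + \<delta>) \<le> X \<omega>} \<le> exp (- \<psi> x - \<delta> * q x)"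
proof -
  interpret prob_space M by fact
  define l where "l = q x / b"
  have l: "0 < l" using q_pos[OF x] b by (simp add: l_def)
  have "integrable M (\<lambda>\<omega>. exp (l * X \<omega>)) \<and> expectation (\<lambda>\<omega>. exp (l * X \<omega>)) \<le> exp (\<phi> (b * l))"
    using mgf unfolding mgf_bound_def by blast
  moreover have "b * l = q x" using b by (simp add: l_def)
  ultimately have mgf_l: "integrable M (\<lambda>\<omega>. exp (l * X \<omega>))"
    "expectation (\<lambda>\<omega>. exp (l * X \<omega>)) \<le> exp (\<phi> (q x))"
    by simp_all
  have "{\<omega> \<in> space M. b * (x + \<delta>) \<le> X \<omega>} = {\<omega> \<in> space M. exp (l * (b * (x + \<delta>))) \<le> exp (l * X \<omega>)}"
    using l by auto
  also have "prob \<dots> \<le> expectation (\<lambda>\<omega>. exp (l * X \<omega>)) / exp (l * (b * (x + \<delta>)))"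
    using mgf_l X by (intro integral_Markov_inequality_measure[of _ _ "space M"]) auto
  also have "\<dots> \<le> exp (\<phi> (q x)) / exp (l * (b * (x + \<delta>)))"
    using mgf_l by (intro divide_right_mono) auto
  also have "\<dots> = exp (- \<psi> x - \<delta> * q x)"
    using psi_eq[of x] x b by (simp add: l_def exp_diff[symmetric] algebra_simps)
  finally show ?thesis .
qed

lemma borel_measurable_q_indicator:
  assumes "0 \<le> u" shows "(\<lambda>x. q x * indicator {u..<v} x) \<in> borel_measurable lborel"
proof -
  have "mono (\<lambda>x. q (max 0 x))" by (rule monoI) (auto intro: q_mono)
  then have [measurable]: "(\<lambda>x. q (max 0 x)) \<in> borel_measurable borel" by (rule borel_measurable_mono)
  have "(\<lambda>x. q x * indicator {u..<v} x) = (\<lambda>x. q (max 0 x) * indicator {u..<v} x)"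
    using assms by (auto simp: indicator_def)
  then show ?thesis by simp
qed

lemma psi_diff_le_riemann_sum:
  assumes u: "0 \<le> u" and \<Delta>: "0 \<le> \<Delta>"
  shows "\<psi> (u + real M * \<Delta>) - \<psi> u
    \<le> (\<Sum>j<M. q (u + real j * \<Delta>) * \<Delta>) + (q (u + real M * \<Delta>) - q u) * \<Delta>"
proof (induction M)
  case (Suc M)
  define s where "s = u + real M * \<Delta>"
  have "\<psi> (s + \<Delta>) - \<psi> s \<le> \<Delta> * q (s + \<Delta>)"
    using psi_diff_le[of s "s + \<Delta>"] u \<Delta> by (simp add: s_def)
  with Suc show ?case by (simp add: s_def algebra_simps)
qed simp

lemma riemann_sum_le_nn_integral_q:
  assumes u: "0 \<le> u" and \<Delta>: "0 \<le> \<Delta>"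
  shows "ennreal (\<Sum>j<M. q (u + real j * \<Delta>) * \<Delta>)
    \<le> (\<integral>\<^sup>+x. ennreal (q x * indicator {u..<u + real M * \<Delta>} x) \<partial>lborel)"
proof (induction M)
  case (Suc M)
  define s where "s = u + real M * \<Delta>"
  have s: "u \<le> s" "u + real (Suc M) * \<Delta> = s + \<Delta>" using u \<Delta> by (auto simp: s_def algebra_simps)
  have "ennreal (q s * \<Delta>) = (\<integral>\<^sup>+x. ennreal (q s) * indicator {s..<s + \<Delta>} x \<partial>lborel)"
    using \<Delta> q_nonneg[of s] u s by (simp add: nn_integral_cmult_indicator ennreal_mult)
  also have "\<dots> \<le> (\<integral>\<^sup>+x. ennreal (q x * indicator {s..<s + \<Delta>} x) \<partial>lborel)"
    using u s by (intro nn_integral_mono) (auto simp: indicator_def intro!: ennreal_leI q_mono)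
  finally have last: "ennreal (q s * \<Delta>) \<le> \<dots>" .
  have meas: "(\<lambda>x. ennreal (q x * indicator {a..<b} x)) \<in> borel_measurable lborel" if "0 \<le> a" for a b
    using borel_measurable_q_indicator[OF that] by measurable
  have "(\<lambda>x. ennreal (q x * indicator {u..<s + \<Delta>} x))
      = (\<lambda>x. ennreal (q x * indicator {u..<s} x) + ennreal (q x * indicator {s..<s + \<Delta>} x))"
    using s(1) \<Delta> by (auto simp: indicator_def)
  then have split: "(\<integral>\<^sup>+x. ennreal (q x * indicator {u..<s + \<Delta>} x) \<partial>lborel)
      = (\<integral>\<^sup>+x. ennreal (q x * indicator {u..<s} x) \<partial>lborel)
        + (\<integral>\<^sup>+x. ennreal (q x * indicator {s..<s + \<Delta>} x) \<partial>lborel)"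
    using u s(1) by (simp only:) (intro nn_integral_add meas; simp)
  have "ennreal (\<Sum>j<Suc M. q (u + real j * \<Delta>) * \<Delta>)
      = ennreal (\<Sum>j<M. q (u + real j * \<Delta>) * \<Delta>) + ennreal (q s * \<Delta>)"
    using u \<Delta> by (simp add: s_def ennreal_plus[symmetric] sum_nonneg q_nonneg del: ennreal_plus)
  also have "\<dots> \<le> (\<integral>\<^sup>+x. ennreal (q x * indicator {u..<s} x) \<partial>lborel)
        + (\<integral>\<^sup>+x. ennreal (q x * indicator {s..<s + \<Delta>} x) \<partial>lborel)"
    using Suc.IH last by (intro add_mono) (simp_all add: s_def)
  finally show ?case unfolding s(2) split .
qed simp

text \<open>\<open>\<psi> v - \<psi> u\<close> is at most an upper Riemann sum of \<open>q\<close>, and on a fine enough mesh the upper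
  and lower sums differ by at most \<open>(\<psi> v - \<psi> u) / 2\<close>.\<close>

lemma half_psi_diff_le_nn_integral_q:
  assumes u: "0 \<le> u" and uv: "u \<le> v"
  shows "ennreal ((\<psi> v - \<psi> u) / 2) \<le> (\<integral>\<^sup>+x. ennreal (q x * indicator {u..<v} x) \<partial>lborel)"
proof (cases "u = v")
  case False
  define D where "D = \<psi> v - \<psi> u"
  have D: "0 < D" using psi_strict_mono[OF u] uv False by (simp add: D_def)
  obtain M :: nat where M: "2 * (q v - q u) * (v - u) / D < real M"
    using reals_Archimedean2 by blast
  have "0 \<le> 2 * (q v - q u) * (v - u) / D" using q_mono[OF u uv] uv D by simp
  then have M_pos: "0 < real M" using M by linarith
  define \<Delta> where "\<Delta> = (v - u) / real M"
  have \<Delta>: "0 \<le> \<Delta>" "u + real M * \<Delta> = v" using uv M_pos by (auto simp: \<Delta>_def)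
  have "(q v - q u) * \<Delta> \<le> D / 2"
    using M M_pos D by (simp add: \<Delta>_def field_simps)
  moreover have "D \<le> (\<Sum>j<M. q (u + real j * \<Delta>) * \<Delta>) + (q v - q u) * \<Delta>"
    using psi_diff_le_riemann_sum[OF u \<Delta>(1), of M] by (simp add: \<Delta>(2) D_def)
  ultimately have "ennreal (D / 2) \<le> ennreal (\<Sum>j<M. q (u + real j * \<Delta>) * \<Delta>)"
    by (intro ennreal_leI) linarith
  also have "\<dots> \<le> (\<integral>\<^sup>+x. ennreal (q x * indicator {u..<v} x) \<partial>lborel)"
    using riemann_sum_le_nn_integral_q[OF u \<Delta>(1), of M] by (simp add: \<Delta>(2))
  finally show ?thesis by (simp add: D_def)
qed simp

end

section \<open>The norming sequence\<close>

locale orlicz_norming = orlicz +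
  fixes g :: "real \<Rightarrow> real"
  assumes g_pos: "\<And>x. 0 < g x" and g_mono: "mono g"
begin

definition norming :: "real \<Rightarrow> real" where
  "norming L = g L * inv_pos \<psi> L"

lemma g_le: "x \<le> y \<Longrightarrow> g x \<le> g y"
  using g_mono by (simp add: mono_def)

lemma norming_mono: "mono_on {0..} norming"
  unfolding norming_def
  by (intro mono_onI mult_mono g_le inv_psi_mono) (auto intro: less_imp_le[OF g_pos] inv_psi(1))

lemma g_zero_mult_le_norming: "0 \<le> L \<Longrightarrow> g 0 * inv_pos \<psi> L \<le> norming L"
  unfolding norming_def using inv_psi(1)[of L] g_le[of 0 L] by (intro mult_right_mono) auto

lemma filterlim_norming_at_top: "filterlim norming at_top at_top"
proof (rule filterlim_at_top_mono)
  show "filterlim (\<lambda>L. g 0 * inv_pos \<psi> L) at_top at_top"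
    using g_pos[of 0] by (intro filterlim_tendsto_pos_mult_at_top[OF tendsto_const] filterlim_inv_psi_at_top)
  show "eventually (\<lambda>L. g 0 * inv_pos \<psi> L \<le> norming L) at_top"
    using g_zero_mult_le_norming by (intro eventually_at_top_linorderI[of 0]) simp
qed

text \<open>\<open>upper_weight \<epsilon> h i\<close> bounds \<open>e^(ih) P(X k n > a(ln(kn)) + \<epsilon>)\<close> on the block
  \<open>e^(ih) \<le> kn < e^((i+1)h)\<close>.\<close>

definition upper_weight :: "real \<Rightarrow> real \<Rightarrow> nat \<Rightarrow> real" where
  "upper_weight \<epsilon> h i = exp (- \<epsilon> * q (inv_pos \<psi> (real i * h)) / g ((real i + 1) * h))"

lemma upper_weight_le_integrand:
  assumes h: "0 < h" "2 * h \<le> ln 2" and \<epsilon>: "0 \<le> \<epsilon>"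
    and x: "inv_pos \<psi> (real i * h) \<le> x" "x < inv_pos \<psi> ((real i + 1) * h)"
  shows "real i * h * upper_weight \<epsilon> h (Suc i) * q x \<le> \<psi> x * q x * exp (- \<epsilon> * q x / g (\<psi> x + ln 2))"
proof -
  have x0: "0 \<le> x" using x(1) inv_psi(1)[of "real i * h"] h by simp
  have psi_x: "real i * h \<le> \<psi> x"
    using psi_mono[of "inv_pos \<psi> (real i * h)" x] inv_psi[of "real i * h"] x h by simp
  have q_x: "0 \<le> q x" "q x \<le> q (inv_pos \<psi> ((real i + 1) * h))"
    using q_nonneg[OF x0] q_mono[OF x0] x(2) by auto
  have "g ((real i + 1 + 1) * h) \<le> g (\<psi> x + ln 2)"
    using psi_x h by (intro g_le) (simp add: algebra_simps)
  then have "\<epsilon> * q x / g (\<psi> x + ln 2) \<le> \<epsilon> * q (inv_pos \<psi> ((real i + 1) * h)) / g ((real i + 1 + 1) * h)"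
    using q_x \<epsilon> g_pos by (intro frac_le mult_left_mono mult_nonneg_nonneg) auto
  moreover have "real (Suc i) = real i + 1" by simp
  ultimately have "upper_weight \<epsilon> h (Suc i) \<le> exp (- \<epsilon> * q x / g (\<psi> x + ln 2))"
    unfolding upper_weight_def by (simp only:) simp
  then have "real i * h * upper_weight \<epsilon> h (Suc i) \<le> \<psi> x * exp (- \<epsilon> * q x / g (\<psi> x + ln 2))"
    using psi_x h psi_nonneg[OF x0] by (intro mult_mono) (auto simp: upper_weight_def)
  then have "real i * h * upper_weight \<epsilon> h (Suc i) * q x \<le> \<psi> x * exp (- \<epsilon> * q x / g (\<psi> x + ln 2)) * q x"
    using q_x(1) by (rule mult_right_mono)
  then show ?thesis by (simp add: algebra_simps)
qed

lemma summable_upper_weight_masses: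
  assumes h: "0 < h" "2 * h \<le> ln 2" and \<epsilon>: "0 < \<epsilon>"
    and integrable: "(\<integral>\<^sup>+ x\<in>{0..}. ennreal (\<psi> x * q x * exp (- \<epsilon> * q x / g (\<psi> x + ln 2))) \<partial>lborel) < \<infinity>"
  shows "summable (\<lambda>i. real i * h * upper_weight \<epsilon> h (Suc i) * (h / 2))"
proof -
  define u where "u i = inv_pos \<psi> (real i * h)" for i
  have u: "0 \<le> u i" "\<psi> (u (Suc i)) - \<psi> (u i) = h" for i
    using h inv_psi[of "real i * h"] inv_psi[of "real (Suc i) * h"] by (auto simp: u_def algebra_simps)
  have "mono u" using h by (auto simp: u_def mono_def intro!: inv_psi_mono mult_right_mono)
  have c: "0 \<le> real i * h * upper_weight \<epsilon> h (Suc i)" for i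
    using h by (intro mult_nonneg_nonneg) (auto simp: upper_weight_def)
  define f where "f i x = real i * h * upper_weight \<epsilon> h (Suc i) * (q x * indicator {u i..<u (Suc i)} x)" for i x
  show ?thesis
  proof (rule summable_by_disjoint_nn_integrals[where f = f and B = "\<lambda>i. {u i..<u (Suc i)}" and
        I = "\<lambda>x. ennreal (\<psi> x * q x * exp (- \<epsilon> * q x / g (\<psi> x + ln 2))) * indicator {0..} x"])
    show "f i \<in> borel_measurable lborel" for i
      unfolding f_def by (rule borel_measurable_times[OF borel_measurable_const borel_measurable_q_indicator[OF u(1)]])
    show "0 \<le> f i x" for i x
      using c[of i] q_nonneg u(1)[of i] by (auto simp: f_def indicator_def)
    show "disjoint_family (\<lambda>i. {u i..<u (Suc i)})"
      using \<open>mono u\<close> by (rule disjoint_family_mono_intervals)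
    show "f i x = 0" if "x \<notin> {u i..<u (Suc i)}" for i x
      using that by (simp add: f_def)
    show "ennreal (f i x) \<le> ennreal (\<psi> x * q x * exp (- \<epsilon> * q x / g (\<psi> x + ln 2))) * indicator {0..} x"
      if x: "x \<in> {u i..<u (Suc i)}" for i x
    proof -
      have "0 \<le> x" using x u(1)[of i] by simp
      from x have "inv_pos \<psi> (real i * h) \<le> x" "x < inv_pos \<psi> ((real i + 1) * h)"
        by (auto simp: u_def algebra_simps)
      then have "real i * h * upper_weight \<epsilon> h (Suc i) * q x \<le> \<psi> x * q x * exp (- \<epsilon> * q x / g (\<psi> x + ln 2))"
        by (rule upper_weight_le_integrand[OF h less_imp_le[OF \<epsilon>]])
      then show ?thesis using x \<open>0 \<le> x\<close> by (simp add: f_def ennreal_leI)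
    qed
    show "(\<integral>\<^sup>+x. ennreal (\<psi> x * q x * exp (- \<epsilon> * q x / g (\<psi> x + ln 2))) * indicator {0..} x \<partial>lborel) < \<infinity>"
      using integrable by simp
    show "0 \<le> real i * h * upper_weight \<epsilon> h (Suc i) * (h / 2)" for i
      using c[of i] h by simp
    show "ennreal (real i * h * upper_weight \<epsilon> h (Suc i) * (h / 2)) \<le> (\<integral>\<^sup>+x. f i x \<partial>lborel)" for i
    proof -
      have "ennreal (real i * h * upper_weight \<epsilon> h (Suc i) * (h / 2))
          = ennreal (real i * h * upper_weight \<epsilon> h (Suc i)) * ennreal ((\<psi> (u (Suc i)) - \<psi> (u i)) / 2)"
        using c[of i] h ennreal_mult[of "real i * h * upper_weight \<epsilon> h (Suc i)" "h / 2"] by (simp add: u(2))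
      also have "\<dots> \<le> ennreal (real i * h * upper_weight \<epsilon> h (Suc i))
          * (\<integral>\<^sup>+x. ennreal (q x * indicator {u i..<u (Suc i)} x) \<partial>lborel)"
        using u(1) monoD[OF \<open>mono u\<close>, of i "Suc i"] by (intro mult_left_mono half_psi_diff_le_nn_integral_q) auto
      also have "\<dots> = (\<integral>\<^sup>+x. f i x \<partial>lborel)"
        using c[of i] q_nonneg u(1)[of i] borel_measurable_q_indicator[OF u(1)]
        by (subst nn_integral_cmult[symmetric]) (auto simp: f_def ennreal_mult indicator_def)
      finally show ?thesis .
    qed
  qed
qed

lemma summable_upper_weights:
  assumes h: "0 < h" "2 * h \<le> ln 2" and \<epsilon>: "0 < \<epsilon>"
    and integrable: "(\<integral>\<^sup>+ x\<in>{0..}. ennreal (\<psi> x * q x * exp (- \<epsilon> * q x / g (\<psi> x + ln 2))) \<partial>lborel) < \<infinity>"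
  shows "summable (\<lambda>i. (real i + 1) * upper_weight \<epsilon> h i)"
proof -
  have W: "0 < upper_weight \<epsilon> h i" for i by (simp add: upper_weight_def)
  have "summable (\<lambda>i. (2 / h\<^sup>2) * (real i * h * upper_weight \<epsilon> h (Suc i) * (h / 2)))"
    by (intro summable_mult summable_upper_weight_masses[OF h \<epsilon> integrable])
  then have "summable (\<lambda>i. 3 * (real i * upper_weight \<epsilon> h (Suc i)))"
    using h by (intro summable_mult) (simp add: power2_eq_square)
  then have "summable (\<lambda>i. (real (Suc i) + 1) * upper_weight \<epsilon> h (Suc i))"
  proof (rule summable_comparison_test'[where N = 1])
    fix i :: nat assume "1 \<le> i"
    then have "real (Suc i) + 1 \<le> 3 * real i" by simp
    then show "norm ((real (Suc i) + 1) * upper_weight \<epsilon> h (Suc i)) \<le> 3 * (real i * upper_weight \<epsilon> h (Suc i))"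
      using W[of "Suc i"] by (simp add: mult_right_mono)
  qed
  then show ?thesis by (rule summable_Suc_iff[THEN iffD1])
qed

lemma finite_low_rectangles_of_grid:
  fixes x :: "nat \<Rightarrow> nat \<Rightarrow> real"
  assumes h: "0 < h" and finite: "finite {(a, b). \<forall>k\<in>{1..exp_grid h a}. \<forall>n\<in>{1..exp_grid h b}.
      x k n < norming ((real (a + b) + 2) * h) - \<epsilon>}"
  shows "finite {(m, j). 1 \<le> m \<and> 1 \<le> j \<and> (\<forall>k\<in>{1..m}. \<forall>n\<in>{1..j}. x k n < norming (ln (real (m * j))) - \<epsilon>)}"
proof -
  obtain Z where Z: "{(a, b). \<forall>k\<in>{1..exp_grid h a}. \<forall>n\<in>{1..exp_grid h b}.
      x k n < norming ((real (a + b) + 2) * h) - \<epsilon>} \<subseteq> {..<Z} \<times> {..<Z}"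
    using finite_pairs_bounded[OF finite] .
  define N where "N = nat \<lceil>exp (real Z * h)\<rceil>"
  have "{(m, j). 1 \<le> m \<and> 1 \<le> j \<and> (\<forall>k\<in>{1..m}. \<forall>n\<in>{1..j}. x k n < norming (ln (real (m * j))) - \<epsilon>)}
      \<subseteq> {..N} \<times> {..N}"
  proof clarify
    fix m j assume m: "1 \<le> m" and j: "1 \<le> j"
      and below: "\<forall>k\<in>{1..m}. \<forall>n\<in>{1..j}. x k n < norming (ln (real (m * j))) - \<epsilon>"
    obtain a b where cell: "exp_grid h a \<le> m" "exp_grid h b \<le> j" "ln (real (m * j)) \<le> (real (a + b) + 2) * h"
        "real m < exp ((real a + 1) * h)" "real j < exp ((real b + 1) * h)"
      using exp_grid_cell[OF h m j] .
    have norming_le: "norming (ln (real (m * j))) \<le> norming ((real (a + b) + 2) * h)"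
      using cell(3) one_le_of_nat_mult[OF m j] h by (intro mono_onD[OF norming_mono]) auto
    have "x k n < norming ((real (a + b) + 2) * h) - \<epsilon>"
      if "k \<in> {1..exp_grid h a}" "n \<in> {1..exp_grid h b}" for k n
    proof -
      have "k \<in> {1..m}" "n \<in> {1..j}" using that cell(1,2) by auto
      then show ?thesis using below norming_le by fastforce
    qed
    then have "a < Z" "b < Z" using Z by blast+
    then have "exp ((real a + 1) * h) \<le> exp (real Z * h)" "exp ((real b + 1) * h) \<le> exp (real Z * h)"
      using h by (simp_all add: mult_right_mono)
    then have "real m \<le> real N" "real j \<le> real N"
      using cell(4,5) real_nat_ceiling_ge[of "exp (real Z * h)"] unfolding N_def by linarith+
    then show "m \<in> {..N} \<and> j \<in> {..N}" by simp
  qed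
  then show ?thesis by (rule finite_subset) simp
qed

end

section \<open>Upper bound\<close>

locale subgaussian_array = orlicz_norming \<phi> p g + prob_space M
  for \<phi> p g :: "real \<Rightarrow> real" and M :: "'a measure" +
  fixes X :: "nat \<Rightarrow> nat \<Rightarrow> 'a \<Rightarrow> real"
  assumes subgaussian: "\<And>k n. k \<ge> 1 \<Longrightarrow> n \<ge> 1 \<Longrightarrow> phi_subgaussian M \<phi> (X k n)"
    and tau_le: "\<And>k n. k \<ge> 1 \<Longrightarrow> n \<ge> 1 \<Longrightarrow> tau_phi M \<phi> (X k n) \<le> g (ln (real (k * n)))"
begin

lemma X_measurable: "1 \<le> k \<Longrightarrow> 1 \<le> n \<Longrightarrow> X k n \<in> borel_measurable M"
  using subgaussian by (simp add: phi_subgaussian_def)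

lemma prob_exceed_le:
  assumes kn: "1 \<le> k" "1 \<le> n" and L: "0 < ln (real (k * n))" and \<epsilon>: "0 \<le> \<epsilon>"
  shows "prob {\<omega> \<in> space M. norming (ln (real (k * n))) + \<epsilon> < X k n \<omega>}
    \<le> exp (- ln (real (k * n)) - \<epsilon> * q (inv_pos \<psi> (ln (real (k * n)))) / g (ln (real (k * n))))"
proof -
  define L where "L = ln (real (k * n))"
  define b where "b = g L"
  have b: "0 < b" using g_pos by (simp add: b_def)
  have "{\<omega> \<in> space M. norming L + \<epsilon> < X k n \<omega>} \<subseteq> {\<omega> \<in> space M. b * (inv_pos \<psi> L + \<epsilon> / b) \<le> X k n \<omega>}"
    using b by (auto simp: norming_def b_def algebra_simps)
  then have "prob {\<omega> \<in> space M. norming L + \<epsilon> < X k n \<omega>}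
      \<le> prob {\<omega> \<in> space M. b * (inv_pos \<psi> L + \<epsilon> / b) \<le> X k n \<omega>}"
    using X_measurable[OF kn] by (intro finite_measure_mono) measurable
  also have "\<dots> \<le> exp (- \<psi> (inv_pos \<psi> L) - \<epsilon> / b * q (inv_pos \<psi> L))"
    using b L \<epsilon> mgf_bound_tau[OF subgaussian[OF kn] tau_le[OF kn]]
    by (intro chernoff_bound[OF prob_space_axioms X_measurable[OF kn]]) (auto simp: b_def L_def inv_psi_pos)
  also have "\<dots> = exp (- L - \<epsilon> * q (inv_pos \<psi> L) / g L)"
    using inv_psi(2)[of L] L by (simp add: L_def b_def)
  finally show ?thesis by (simp add: L_def)
qed

definition exceed :: "real \<Rightarrow> nat \<times> nat \<Rightarrow> 'a set" where
  "exceed \<epsilon> = (\<lambda>(k, n). if 1 \<le> k \<and> 1 \<le> n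
     then {\<omega> \<in> space M. norming (ln (real (k * n))) + \<epsilon> < X k n \<omega>} else {})"

lemma exceed_event: "exceed \<epsilon> pr \<in> events"
  using X_measurable by (cases pr) (auto simp: exceed_def)

lemma prob_exceed_prod_block_le:
  assumes h: "0 < h" and i: "1 \<le> i" and \<epsilon>: "0 \<le> \<epsilon>" and pr: "pr \<in> prod_block h i"
  shows "prob (exceed \<epsilon> pr) \<le> exp (- (real i * h)) * upper_weight \<epsilon> h i"
proof -
  obtain k n where pr_eq: "pr = (k, n)" by force
  define L where "L = ln (real (k * n))"
  have kn: "1 \<le> k" "1 \<le> n" and "exp (real i * h) \<le> exp L" "exp L < exp ((real i + 1) * h)"
    using pr by (auto simp: pr_eq prod_block_def L_def simp del: of_nat_mult)
  then have L: "real i * h \<le> L" "L < (real i + 1) * h" by simp_all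
  have "0 < real i * h" using h i by simp
  then have "0 < L" using L by linarith
  have "prob (exceed \<epsilon> pr) \<le> exp (- L - \<epsilon> * q (inv_pos \<psi> L) / g L)"
    using prob_exceed_le[OF kn _ \<epsilon>] \<open>0 < L\<close> by (simp add: exceed_def pr_eq kn L_def)
  also have "\<dots> \<le> exp (- (real i * h) + - \<epsilon> * q (inv_pos \<psi> (real i * h)) / g ((real i + 1) * h))"
  proof -
    have "q (inv_pos \<psi> (real i * h)) \<le> q (inv_pos \<psi> L)"
      using L h inv_psi(1) by (intro q_mono inv_psi_mono) auto
    then have "\<epsilon> * q (inv_pos \<psi> (real i * h)) / g ((real i + 1) * h) \<le> \<epsilon> * q (inv_pos \<psi> L) / g L"
      using L \<epsilon> g_pos q_nonneg inv_psi(1) h \<open>0 < L\<close>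
      by (intro frac_le mult_left_mono mult_nonneg_nonneg g_le) auto
    then show ?thesis using L by simp
  qed
  finally show ?thesis by (simp only: upper_weight_def exp_add)
qed

lemma sum_prob_exceed_prod_block_le:
  assumes h: "0 < h" and i: "1 \<le> i" and \<epsilon>: "0 \<le> \<epsilon>"
  shows "(\<Sum>pr\<in>prod_block h i. prob (exceed \<epsilon> pr)) \<le> exp h * (1 + h) * ((real i + 1) * upper_weight \<epsilon> h i)"
proof -
  have W: "0 \<le> upper_weight \<epsilon> h i" by (simp add: upper_weight_def)
  have "(\<Sum>pr\<in>prod_block h i. prob (exceed \<epsilon> pr)) \<le> real (card (prod_block h i)) * (exp (- (real i * h)) * upper_weight \<epsilon> h i)"
    using sum_mono[OF prob_exceed_prod_block_le[OF h i \<epsilon>]] by simp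
  also have "\<dots> \<le> exp ((real i + 1) * h) * (1 + (real i + 1) * h) * (exp (- (real i * h)) * upper_weight \<epsilon> h i)"
    using W by (intro mult_right_mono card_prod_block_le[OF h]) simp
  also have "\<dots> = exp h * (1 + (real i + 1) * h) * upper_weight \<epsilon> h i"
  proof -
    have "exp ((real i + 1) * h) = exp h * exp (real i * h)" by (simp add: exp_add[symmetric] algebra_simps)
    then show ?thesis by (simp add: exp_minus field_simps)
  qed
  also have "\<dots> \<le> exp h * ((1 + h) * (real i + 1)) * upper_weight \<epsilon> h i"
    using h W by (intro mult_right_mono mult_left_mono) (auto simp: algebra_simps)
  finally show ?thesis by (simp add: mult.assoc)
qed

lemma AE_finite_exceedances:
  assumes \<epsilon>: "0 < \<epsilon>"
    and integrable: "(\<integral>\<^sup>+ x\<in>{0..}. ennreal (\<psi> x * q x * exp (- \<epsilon> * q x / g (\<psi> x + ln 2))) \<partial>lborel) < \<infinity>"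
  shows "AE \<omega> in M. finite {(k, n). 1 \<le> k \<and> 1 \<le> n \<and> norming (ln (real (k * n))) + \<epsilon> < X k n \<omega>}"
proof -
  define h :: real where "h = ln 2 / 2"
  have h: "0 < h" "2 * h \<le> ln 2" by (simp_all add: h_def)
  have "AE \<omega> in M. finite {pr. \<omega> \<in> exceed \<epsilon> pr}"
  proof (rule AE_finite_occurrences_by_blocks[OF exceed_event finite_prod_block disjoint_family_prod_block[OF h(1)]])
    show "\<exists>i. pr \<in> prod_block h i" if "prob (exceed \<epsilon> pr) \<noteq> 0" for pr
      using that mem_prod_block[OF h(1)] by (cases pr) (auto simp: exceed_def split: if_splits)
    have "summable (\<lambda>i. exp h * (1 + h) * ((real i + 1) * upper_weight \<epsilon> h i))"
      by (intro summable_mult summable_upper_weights[OF h \<epsilon> integrable])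
    then show "summable (\<lambda>i. \<Sum>pr\<in>prod_block h i. prob (exceed \<epsilon> pr))"
    proof (rule summable_comparison_test'[where N = 1])
      fix i :: nat assume "1 \<le> i"
      then show "norm (\<Sum>pr\<in>prod_block h i. prob (exceed \<epsilon> pr))
          \<le> exp h * (1 + h) * ((real i + 1) * upper_weight \<epsilon> h i)"
        using sum_prob_exceed_prod_block_le[OF h(1) _ less_imp_le[OF \<epsilon>]] by (simp add: sum_nonneg)
    qed
  qed
  then show ?thesis
    using AE_space by eventually_elim (auto elim!: finite_subset[rotated] simp: exceed_def)
qed

end

section \<open>Lower bound\<close>

locale lower_tail_array = orlicz_norming \<phi> p g + prob_space M
  for \<phi> p g :: "real \<Rightarrow> real" and M :: "'a measure" +
  fixes X :: "nat \<Rightarrow> nat \<Rightarrow> 'a \<Rightarrow> real" and \<kappa> :: "real \<Rightarrow> real" and C :: real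
  assumes indep: "indep_vars (\<lambda>_. borel) (\<lambda>(k, n). X k n) ({1..} \<times> {1..})"
    and \<kappa>_mono: "mono \<kappa>" and C_pos: "0 < C"
    and lower_tail: "\<And>k n x. k \<ge> 1 \<Longrightarrow> n \<ge> 1 \<Longrightarrow> x > 0 \<Longrightarrow>
      prob {\<omega> \<in> space M. X k n \<omega> / g (ln (real (k * n))) < x} \<le> exp (- C * exp (- \<kappa> x))"
begin

lemma X_measurable: "1 \<le> k \<Longrightarrow> 1 \<le> n \<Longrightarrow> X k n \<in> borel_measurable M"
  using indep unfolding indep_vars_def by auto

lemma prob_less_le:
  assumes kn: "1 \<le> k" "1 \<le> n" and t: "0 < t"
  shows "prob {\<omega> \<in> space M. X k n \<omega> < t} \<le> exp (- C * exp (- \<kappa> (t / g 0)))"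
proof -
  define G where "G = g (ln (real (k * n)))"
  have G: "0 < G" "g 0 \<le> G"
    using g_pos one_le_of_nat_mult[OF kn] by (auto simp: G_def intro!: g_le)
  have "{\<omega> \<in> space M. X k n \<omega> < t} = {\<omega> \<in> space M. X k n \<omega> / G < t / G}"
    using G by (auto simp: divide_less_cancel)
  then have "prob {\<omega> \<in> space M. X k n \<omega> < t} \<le> exp (- C * exp (- \<kappa> (t / G)))"
    using lower_tail[OF kn, of "t / G"] t G by (simp add: G_def)
  also have "\<dots> \<le> exp (- C * exp (- \<kappa> (t / g 0)))"
  proof -
    have "t / G \<le> t / g 0" using t G g_pos[of 0] by (intro divide_left_mono) auto
    then have "\<kappa> (t / G) \<le> \<kappa> (t / g 0)" using \<kappa>_mono by (simp add: mono_def)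
    then show ?thesis using C_pos by simp
  qed
  finally show ?thesis .
qed

lemma prob_rectangle_less_le:
  assumes m: "1 \<le> m" and j: "1 \<le> j" and t: "0 < t"
  shows "prob {\<omega> \<in> space M. \<forall>k\<in>{1..m}. \<forall>n\<in>{1..j}. X k n \<omega> < t}
    \<le> exp (- C * real (m * j) * exp (- \<kappa> (t / g 0)))"
proof -
  define R where "R = {1..m} \<times> {1..j}"
  have R: "R \<noteq> {}" "finite R" "R \<subseteq> {1..} \<times> {1..}" "card R = m * j" using m j by (auto simp: R_def)
  have "{\<omega> \<in> space M. \<forall>k\<in>{1..m}. \<forall>n\<in>{1..j}. X k n \<omega> < t} = (\<Inter>i\<in>R. (\<lambda>(k, n). X k n) i -` {..<t} \<inter> space M)"
    using R(1) by (auto simp: R_def)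
  also have "prob \<dots> = (\<Prod>i\<in>R. prob ((\<lambda>(k, n). X k n) i -` {..<t} \<inter> space M))"
    by (rule indep_varsD[OF indep R(1-3)]) simp
  also have "\<dots> \<le> (\<Prod>i\<in>R. exp (- C * exp (- \<kappa> (t / g 0))))"
  proof (rule prod_mono)
    fix i assume "i \<in> R"
    then obtain k n where i: "i = (k, n)" "1 \<le> k" "1 \<le> n" by (auto simp: R_def)
    then have "(\<lambda>(k, n). X k n) i -` {..<t} \<inter> space M = {\<omega> \<in> space M. X k n \<omega> < t}" by auto
    then show "0 \<le> prob ((\<lambda>(k, n). X k n) i -` {..<t} \<inter> space M)
        \<and> prob ((\<lambda>(k, n). X k n) i -` {..<t} \<inter> space M) \<le> exp (- C * exp (- \<kappa> (t / g 0)))"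
      using prob_less_le[OF i(2,3) t] by simp
  qed
  also have "\<dots> = exp (- C * real (m * j) * exp (- \<kappa> (t / g 0)))"
    using R(4) by (simp add: exp_of_nat_mult[symmetric] algebra_simps)
  finally show ?thesis .
qed

text \<open>\<open>lower_weight \<epsilon> h (a + b)\<close> bounds the probability that all \<open>X k n\<close> of the
  \<open>\<lceil>e^(ah)\<rceil> \<times> \<lceil>e^(bh)\<rceil>\<close> rectangle stay below \<open>norming ((a + b + 2) h) - \<epsilon>\<close>.\<close>

definition lower_weight :: "real \<Rightarrow> real \<Rightarrow> nat \<Rightarrow> real" where
  "lower_weight \<epsilon> h s = exp (- C * exp (real s * h) * exp (- \<kappa> ((norming ((real s + 2) * h) - \<epsilon>) / g 0)))"

lemma lower_weight_le_integrand:
  assumes h: "0 < h" "3 * h \<le> ln 2" and \<epsilon>: "0 \<le> \<epsilon>"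
    and y: "exp ((real s + 2) * h) \<le> y" "y < exp ((real s + 3) * h)"
  shows "lower_weight \<epsilon> h s \<le> exp (- (C * y / 2) * exp (- \<kappa> (g (ln y) / g 0 * inv_pos \<psi> (ln y) - \<epsilon> / g (ln y))))"
proof -
  have y_pos: "0 < y" using y(1) by (smt (verit) exp_gt_zero)
  then have L: "(real s + 2) * h \<le> ln y" using y(1) by (simp add: ln_ge_iff)
  have L0: "0 \<le> (real s + 2) * h" using h by simp
  have "norming ((real s + 2) * h) \<le> norming (ln y)"
    using L L0 by (intro mono_onD[OF norming_mono]) auto
  then have "norming ((real s + 2) * h) / g 0 \<le> g (ln y) / g 0 * inv_pos \<psi> (ln y)"
    using g_pos[of 0] by (simp add: norming_def divide_right_mono)
  moreover have "\<epsilon> / g (ln y) \<le> \<epsilon> / g 0"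
    using L L0 \<epsilon> g_pos by (intro divide_left_mono g_le mult_pos_pos) auto
  ultimately have "(norming ((real s + 2) * h) - \<epsilon>) / g 0 \<le> g (ln y) / g 0 * inv_pos \<psi> (ln y) - \<epsilon> / g (ln y)"
    by (simp add: diff_divide_distrib)
  then have \<kappa>_le: "exp (- \<kappa> (g (ln y) / g 0 * inv_pos \<psi> (ln y) - \<epsilon> / g (ln y)))
      \<le> exp (- \<kappa> ((norming ((real s + 2) * h) - \<epsilon>) / g 0))"
    using \<kappa>_mono by (simp add: mono_def)
  have "exp ((real s + 3) * h) = exp (real s * h) * exp (3 * h)" by (simp add: exp_add[symmetric] algebra_simps)
  also have "\<dots> \<le> exp (real s * h) * 2"
    using h by (intro mult_left_mono) (auto simp: exp_le_cancel_iff[symmetric, of _ "ln 2"])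
  finally have "C * y / 2 \<le> C * exp (real s * h)" using y(2) C_pos by simp
  then have "C * y / 2 * exp (- \<kappa> (g (ln y) / g 0 * inv_pos \<psi> (ln y) - \<epsilon> / g (ln y)))
      \<le> C * exp (real s * h) * exp (- \<kappa> ((norming ((real s + 2) * h) - \<epsilon>) / g 0))"
    using \<kappa>_le C_pos y_pos by (intro mult_mono) auto
  then show ?thesis by (simp add: lower_weight_def)
qed

lemma summable_lower_weight_masses:
  assumes h: "0 < h" "3 * h \<le> ln 2" and \<epsilon>: "0 \<le> \<epsilon>" and A: "A \<le> exp ((real s\<^sub>0 + 2) * h)"
    and integrable: "(\<integral>\<^sup>+ y\<in>{A..}. ennreal (exp (- (C * y / 2) *
      exp (- \<kappa> (g (ln y) / g 0 * inv_pos \<psi> (ln y) - \<epsilon> / g (ln y))))) \<partial>lborel) < \<infinity>"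
  shows "summable (\<lambda>s. lower_weight \<epsilon> h (s + s\<^sub>0)
    * (exp ((real (s + s\<^sub>0) + 3) * h) - exp ((real (s + s\<^sub>0) + 2) * h)))"
proof -
  define v where "v s = exp ((real (s + s\<^sub>0) + 2) * h)" for s
  have v_Suc: "v (Suc s) = exp ((real (s + s\<^sub>0) + 3) * h)" for s by (simp add: v_def algebra_simps)
  have "mono v" using h by (auto simp: v_def mono_def mult_right_mono)
  have W: "0 < lower_weight \<epsilon> h s" for s by (simp add: lower_weight_def)
  define f where "f s y = lower_weight \<epsilon> h (s + s\<^sub>0) * indicator {v s..<v (Suc s)} y" for s y
  show ?thesis
  proof (rule summable_by_disjoint_nn_integrals[where f = f and B = "\<lambda>s. {v s..<v (Suc s)}" and
        I = "\<lambda>y. ennreal (exp (- (C * y / 2) * exp (- \<kappa> (g (ln y) / g 0 * inv_pos \<psi> (ln y) - \<epsilon> / g (ln y)))))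
          * indicator {A..} y"])
    show "f s \<in> borel_measurable lborel" for s unfolding f_def by measurable
    show "0 \<le> f s y" for s y using W[of "s + s\<^sub>0"] by (simp add: f_def)
    show "disjoint_family (\<lambda>s. {v s..<v (Suc s)})" using \<open>mono v\<close> by (rule disjoint_family_mono_intervals)
    show "f s y = 0" if "y \<notin> {v s..<v (Suc s)}" for s y using that by (simp add: f_def)
    show "ennreal (f s y) \<le> ennreal (exp (- (C * y / 2) *
        exp (- \<kappa> (g (ln y) / g 0 * inv_pos \<psi> (ln y) - \<epsilon> / g (ln y))))) * indicator {A..} y"
      if y: "y \<in> {v s..<v (Suc s)}" for s y
    proof -
      have "A \<le> v 0" using A by (simp add: v_def)
      also have "\<dots> \<le> v s" by (rule monoD[OF \<open>mono v\<close>]) simp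
      also have "\<dots> \<le> y" using y by simp
      finally have "A \<le> y" .
      moreover have "lower_weight \<epsilon> h (s + s\<^sub>0)
          \<le> exp (- (C * y / 2) * exp (- \<kappa> (g (ln y) / g 0 * inv_pos \<psi> (ln y) - \<epsilon> / g (ln y))))"
        using y by (intro lower_weight_le_integrand[OF h \<epsilon>]) (auto simp: v_def v_Suc algebra_simps)
      ultimately show ?thesis using y by (simp add: f_def ennreal_leI)
    qed
    show "(\<integral>\<^sup>+y. ennreal (exp (- (C * y / 2) * exp (- \<kappa> (g (ln y) / g 0 * inv_pos \<psi> (ln y) - \<epsilon> / g (ln y)))))
        * indicator {A..} y \<partial>lborel) < \<infinity>"
      using integrable by simp
    show "0 \<le> lower_weight \<epsilon> h (s + s\<^sub>0) * (exp ((real (s + s\<^sub>0) + 3) * h) - exp ((real (s + s\<^sub>0) + 2) * h))" for s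
      using W[of "s + s\<^sub>0"] h by simp
    show "ennreal (lower_weight \<epsilon> h (s + s\<^sub>0) * (exp ((real (s + s\<^sub>0) + 3) * h) - exp ((real (s + s\<^sub>0) + 2) * h)))
        \<le> (\<integral>\<^sup>+y. f s y \<partial>lborel)" for s
    proof -
      have le: "v s \<le> v (Suc s)" using \<open>mono v\<close> by (simp add: monoD)
      have "(\<integral>\<^sup>+y. f s y \<partial>lborel)
          = (\<integral>\<^sup>+y. ennreal (lower_weight \<epsilon> h (s + s\<^sub>0)) * indicator {v s..<v (Suc s)} y \<partial>lborel)"
        by (intro nn_integral_cong) (simp add: f_def indicator_def)
      also have "\<dots> = ennreal (lower_weight \<epsilon> h (s + s\<^sub>0)) * ennreal (v (Suc s) - v s)"
        using le by (simp add: nn_integral_cmult_indicator)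
      also have "\<dots> = ennreal (lower_weight \<epsilon> h (s + s\<^sub>0) * (v (Suc s) - v s))"
        using W[of "s + s\<^sub>0"] le by (simp add: ennreal_mult)
      finally show ?thesis unfolding v_Suc by (simp add: v_def)
    qed
  qed
qed

lemma summable_lower_weights:
  assumes h: "0 < h" "3 * h \<le> ln 2" and \<epsilon>: "0 \<le> \<epsilon>" and A: "0 < A"
    and integrable: "(\<integral>\<^sup>+ y\<in>{A..}. ennreal (exp (- (C * y / 2) *
      exp (- \<kappa> (g (ln y) / g 0 * inv_pos \<psi> (ln y) - \<epsilon> / g (ln y))))) \<partial>lborel) < \<infinity>"
  shows "summable (\<lambda>s. (real s + 1) * lower_weight \<epsilon> h s)"
proof -
  obtain s\<^sub>0 :: nat where "ln A / h \<le> real s\<^sub>0" using real_arch_simple by blast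
  then have "ln A \<le> (real s\<^sub>0 + 2) * h" using h by (simp add: pos_divide_le_eq algebra_simps)
  then have "exp (ln A) \<le> exp ((real s\<^sub>0 + 2) * h)" by simp
  then have s\<^sub>0: "A \<le> exp ((real s\<^sub>0 + 2) * h)" using A by simp
  have "h \<le> 1" using h ln_2_less_1 by linarith
  have "summable (\<lambda>s. 1 / h\<^sup>2 * (lower_weight \<epsilon> h (s + s\<^sub>0)
      * (exp ((real (s + s\<^sub>0) + 3) * h) - exp ((real (s + s\<^sub>0) + 2) * h))))"
    by (intro summable_mult summable_lower_weight_masses[OF h \<epsilon> s\<^sub>0 integrable])
  then have "summable (\<lambda>s. (real (s + s\<^sub>0) + 1) * lower_weight \<epsilon> h (s + s\<^sub>0))"
  proof (rule summable_comparison_test'[where N = 0])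
    fix s :: nat
    have W: "0 < lower_weight \<epsilon> h (s + s\<^sub>0)" by (simp add: lower_weight_def)
    have "real (s + s\<^sub>0) + 1 \<le> (exp ((real (s + s\<^sub>0) + 3) * h) - exp ((real (s + s\<^sub>0) + 2) * h)) / h\<^sup>2"
      using exp_increment_ge[OF h(1) \<open>h \<le> 1\<close>, of "s + s\<^sub>0"] h by (simp add: pos_le_divide_eq)
    then have "(real (s + s\<^sub>0) + 1) * lower_weight \<epsilon> h (s + s\<^sub>0)
        \<le> (exp ((real (s + s\<^sub>0) + 3) * h) - exp ((real (s + s\<^sub>0) + 2) * h)) / h\<^sup>2 * lower_weight \<epsilon> h (s + s\<^sub>0)"
      using W by (intro mult_right_mono) auto
    also have "\<dots> = 1 / h\<^sup>2 * (lower_weight \<epsilon> h (s + s\<^sub>0)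
        * (exp ((real (s + s\<^sub>0) + 3) * h) - exp ((real (s + s\<^sub>0) + 2) * h)))"
      by (simp add: field_simps)
    finally show "norm ((real (s + s\<^sub>0) + 1) * lower_weight \<epsilon> h (s + s\<^sub>0)) \<le> 1 / h\<^sup>2 * (lower_weight \<epsilon> h (s + s\<^sub>0)
        * (exp ((real (s + s\<^sub>0) + 3) * h) - exp ((real (s + s\<^sub>0) + 2) * h)))"
      using W by simp
  qed
  then show ?thesis by (rule summable_iff_shift[THEN iffD1])
qed

definition low_grid_event :: "real \<Rightarrow> real \<Rightarrow> nat \<times> nat \<Rightarrow> 'a set" where
  "low_grid_event \<epsilon> h = (\<lambda>(a, b). {\<omega> \<in> space M. \<forall>k\<in>{1..exp_grid h a}. \<forall>n\<in>{1..exp_grid h b}.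
     X k n \<omega> < norming ((real (a + b) + 2) * h) - \<epsilon>})"

lemma low_grid_event_in_events: "low_grid_event \<epsilon> h ab \<in> events"
proof -
  obtain a b where ab: "ab = (a, b)" by force
  have "low_grid_event \<epsilon> h ab = space M \<inter> (\<Inter>k\<in>{1..exp_grid h a}. \<Inter>n\<in>{1..exp_grid h b}.
      {\<omega> \<in> space M. X k n \<omega> < norming ((real (a + b) + 2) * h) - \<epsilon>})"
    by (auto simp: low_grid_event_def ab)
  also have "\<dots> \<in> events"
    using X_measurable exp_grid_pos[of h a] exp_grid_pos[of h b]
    by (intro sets.Int sets.top sets.finite_INT) auto
  finally show ?thesis .
qed

lemma prob_low_grid_event_le:
  assumes h: "0 \<le> h" and pos: "0 < norming ((real (a + b) + 2) * h) - \<epsilon>"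
  shows "prob (low_grid_event \<epsilon> h (a, b)) \<le> lower_weight \<epsilon> h (a + b)"
proof -
  define t where "t = norming ((real (a + b) + 2) * h) - \<epsilon>"
  have "exp (real (a + b) * h) = exp (real a * h) * exp (real b * h)"
    by (simp add: exp_add[symmetric] algebra_simps)
  also have "\<dots> \<le> real (exp_grid h a) * real (exp_grid h b)"
    using exp_grid_ge[of a h] exp_grid_ge[of b h] by (intro mult_mono) auto
  finally have "C * exp (real (a + b) * h) * exp (- \<kappa> (t / g 0))
      \<le> C * real (exp_grid h a * exp_grid h b) * exp (- \<kappa> (t / g 0))"
    using C_pos by (intro mult_right_mono mult_left_mono) auto
  then have weight_le: "exp (- C * real (exp_grid h a * exp_grid h b) * exp (- \<kappa> (t / g 0)))
      \<le> exp (- C * exp (real (a + b) * h) * exp (- \<kappa> (t / g 0)))"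
    by simp
  have "prob (low_grid_event \<epsilon> h (a, b)) \<le> exp (- C * real (exp_grid h a * exp_grid h b) * exp (- \<kappa> (t / g 0)))"
    using prob_rectangle_less_le[OF exp_grid_pos exp_grid_pos, of t] pos by (simp add: low_grid_event_def t_def)
  also have "\<dots> \<le> exp (- C * exp (real (a + b) * h) * exp (- \<kappa> (t / g 0)))" by (fact weight_le)
  also have "\<dots> = lower_weight \<epsilon> h (a + b)" by (simp add: lower_weight_def t_def)
  finally show ?thesis .
qed

lemma AE_finite_low_grid_events:
  assumes h: "0 < h" "3 * h \<le> ln 2" and \<epsilon>: "0 \<le> \<epsilon>" and A: "0 < A"
    and integrable: "(\<integral>\<^sup>+ y\<in>{A..}. ennreal (exp (- (C * y / 2) *
      exp (- \<kappa> (g (ln y) / g 0 * inv_pos \<psi> (ln y) - \<epsilon> / g (ln y))))) \<partial>lborel) < \<infinity>"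
  shows "AE \<omega> in M. finite {ab. \<omega> \<in> low_grid_event \<epsilon> h ab}"
proof (rule AE_finite_occurrences_by_blocks[OF low_grid_event_in_events finite_diagonal disjoint_family_diagonal])
  show "\<exists>s. ab \<in> diagonal s" for ab by (cases ab) (auto simp: mem_diagonal)
  obtain L\<^sub>1 where L\<^sub>1: "\<And>L. L\<^sub>1 \<le> L \<Longrightarrow> \<epsilon> + 1 \<le> norming L"
    using filterlim_norming_at_top unfolding filterlim_at_top eventually_at_top_linorder by blast
  define s\<^sub>1 where "s\<^sub>1 = nat \<lceil>L\<^sub>1 / h\<rceil>"
  show "summable (\<lambda>s. \<Sum>ab\<in>diagonal s. prob (low_grid_event \<epsilon> h ab))"
  proof (rule summable_comparison_test'[OF summable_lower_weights[OF h \<epsilon> A integrable], where N = s\<^sub>1])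
    fix s assume "s\<^sub>1 \<le> s"
    then have "L\<^sub>1 / h \<le> real s" using real_nat_ceiling_ge[of "L\<^sub>1 / h"] unfolding s\<^sub>1_def by linarith
    then have "L\<^sub>1 \<le> real s * h" using h by (simp add: pos_divide_le_eq)
    then have "L\<^sub>1 \<le> (real s + 2) * h" using h by (simp add: algebra_simps)
    then have pos: "0 < norming ((real s + 2) * h) - \<epsilon>" using L\<^sub>1 by fastforce
    have "prob (low_grid_event \<epsilon> h ab) \<le> lower_weight \<epsilon> h s" if "ab \<in> diagonal s" for ab
    proof -
      obtain a b where ab: "ab = (a, b)" by force
      with that have "a + b = s" by (simp add: mem_diagonal)
      then show ?thesis using prob_low_grid_event_le[of h a b \<epsilon>] pos h by (simp add: ab)
    qed
    then have "(\<Sum>ab\<in>diagonal s. prob (low_grid_event \<epsilon> h ab)) \<le> (\<Sum>ab\<in>diagonal s. lower_weight \<epsilon> h s)"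
      by (rule sum_mono)
    also have "\<dots> \<le> (real s + 1) * lower_weight \<epsilon> h s"
      using card_diagonal_le[of s] by (simp add: lower_weight_def mult_right_mono)
    finally show "norm (\<Sum>ab\<in>diagonal s. prob (low_grid_event \<epsilon> h ab)) \<le> (real s + 1) * lower_weight \<epsilon> h s"
      by (simp add: sum_nonneg)
  qed
qed

lemma AE_finite_low_rectangles:
  assumes \<epsilon>: "0 < \<epsilon>" and A: "0 < A"
    and integrable: "(\<integral>\<^sup>+ y\<in>{A..}. ennreal (exp (- (C * y / 2) *
      exp (- \<kappa> (g (ln y) / g 0 * inv_pos \<psi> (ln y) - \<epsilon> / g (ln y))))) \<partial>lborel) < \<infinity>"
  shows "AE \<omega> in M. finite {(m, j). 1 \<le> m \<and> 1 \<le> j \<and>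
    (\<forall>k\<in>{1..m}. \<forall>n\<in>{1..j}. X k n \<omega> < norming (ln (real (m * j))) - \<epsilon>)}"
proof -
  define h :: real where "h = ln 2 / 3"
  have h: "0 < h" "3 * h \<le> ln 2" by (simp_all add: h_def)
  show ?thesis
    using AE_finite_low_grid_events[OF h less_imp_le[OF \<epsilon>] A integrable] AE_space
  proof eventually_elim
    case (elim \<omega>)
    then show ?case by (intro finite_low_rectangles_of_grid[OF h(1)]) (simp add: low_grid_event_def case_prod_unfold)
  qed
qed

end

theorem theorem3:
  fixes M :: "'a measure"
    and \<phi> p g \<kappa> r C\<^sub>0 :: "real \<Rightarrow> real"
    and X :: "nat \<Rightarrow> nat \<Rightarrow> 'a \<Rightarrow> real"
    and C :: real
  defines "\<psi> \<equiv> young_fenchel \<phi>"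
    and "q \<equiv> gen_inverse p"
  assumes M: "prob_space M"
    and N: "orlicz_N_function \<phi>"
    and dens: "orlicz_density \<phi> p"
    and indep: "prob_space.indep_vars M (\<lambda>_. borel) (\<lambda>(k, n). X k n) ({1..} \<times> {1..})"
    and subg: "\<And>k n. k \<ge> 1 \<Longrightarrow> n \<ge> 1 \<Longrightarrow> phi_subgaussian M \<phi> (X k n)"
    and g_pos: "\<And>x. g x > 0" and g_mono: "mono g"
    and tau: "\<And>k n. k \<ge> 1 \<Longrightarrow> n \<ge> 1 \<Longrightarrow> tau_phi M \<phi> (X k n) \<le> g (ln (real (k * n)))"
    and cond1: "\<exists>\<epsilon>\<^sub>0>0. \<forall>\<epsilon>. 0 < \<epsilon> \<and> \<epsilon> \<le> \<epsilon>\<^sub>0 \<longrightarrow>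
        (\<integral>\<^sup>+ x\<in>{0..}. ennreal (\<psi> x * q x * exp (- \<epsilon> * q x / g (\<psi> x + ln 2))) \<partial>lborel) < \<infinity>"
    and \<kappa>_pos: "\<And>x. \<kappa> x > 0" and \<kappa>_mono: "strict_mono \<kappa>"
    and \<kappa>_deriv: "\<And>x. (\<kappa> has_real_derivative r x) (at x)"
    and r_mono: "mono_on {0<..} r"
    and C_pos: "C > 0"
    and cond2: "\<And>k n x. k \<ge> 1 \<Longrightarrow> n \<ge> 1 \<Longrightarrow> x > 0 \<Longrightarrow>
        measure M {\<omega> \<in> space M. X k n \<omega> / g (ln (real (k * n))) < x} \<le> exp (- C * exp (- \<kappa> x))"
    and cond3: "\<And>x. x > 0 \<Longrightarrow> \<psi> x - \<kappa> (x * g x / g 0) \<ge> C\<^sub>0 x"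
    and cond4: "\<exists>A>0. \<exists>\<epsilon>\<^sub>1>0. \<forall>\<epsilon>. 0 < \<epsilon> \<and> \<epsilon> \<le> \<epsilon>\<^sub>1 \<longrightarrow>
        (\<integral>\<^sup>+ y\<in>{A..}. ennreal (exp (- (C * y / 2) *
            exp (- \<kappa> (g (ln y) / g 0 * inv_pos \<psi> (ln y) - \<epsilon> / g (ln y))))) \<partial>lborel) < \<infinity> \<and>
        (\<integral>\<^sup>+ y\<in>{A..}. ennreal (\<psi> y * q y * exp (\<psi> y - C / 2 *
            exp (C\<^sub>0 y + \<epsilon> * r (y * g (\<psi> y) / g 0 - \<epsilon> / g (\<psi> y)) / g (\<psi> y)))) \<partial>lborel) < \<infinity>"
  shows "AE \<omega> in M. double_lim
           (\<lambda>m j. Max {X k n \<omega> | k n. k \<in> {1..m} \<and> n \<in> {1..j}}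
                  - g (ln (real (m * j))) * inv_pos \<psi> (ln (real (m * j)))) 0"
proof -
  have norming: "orlicz_norming \<phi> p g"
    using N dens g_pos g_mono by (simp add: orlicz_norming_def orlicz_norming_axioms_def orlicz_def)
  interpret subgaussian_array \<phi> p g M X
    by (rule subgaussian_array.intro[OF norming M]) (use subg tau in \<open>unfold_locales\<close>)
  interpret lower: lower_tail_array \<phi> p g M X \<kappa> C
    by (rule lower_tail_array.intro[OF norming M])
      (use indep strict_mono_mono[OF \<kappa>_mono] C_pos cond2 in \<open>unfold_locales\<close>)
  obtain \<epsilon>\<^sub>0 where "0 < \<epsilon>\<^sub>0" and int1: "\<forall>\<epsilon>. 0 < \<epsilon> \<and> \<epsilon> \<le> \<epsilon>\<^sub>0 \<longrightarrow>
      (\<integral>\<^sup>+ x\<in>{0..}. ennreal (\<psi> x * q x * exp (- \<epsilon> * q x / g (\<psi> x + ln 2))) \<partial>lborel) < \<infinity>"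
    using cond1 by blast
  obtain A \<epsilon>\<^sub>1 where "0 < A" "0 < \<epsilon>\<^sub>1" and int4: "\<forall>\<epsilon>. 0 < \<epsilon> \<and> \<epsilon> \<le> \<epsilon>\<^sub>1 \<longrightarrow>
      (\<integral>\<^sup>+ y\<in>{A..}. ennreal (exp (- (C * y / 2) *
        exp (- \<kappa> (g (ln y) / g 0 * inv_pos \<psi> (ln y) - \<epsilon> / g (ln y))))) \<partial>lborel) < \<infinity>"
    using cond4 by blast
  have "AE \<omega> in M. double_lim
    (\<lambda>m j. Max {X k n \<omega> | k n. k \<in> {1..m} \<and> n \<in> {1..j}} - norming (ln (real (m * j)))) 0"
  proof (rule AE_double_lim_Max_rectangle[OF norming_mono filterlim_norming_at_top, of "min \<epsilon>\<^sub>0 \<epsilon>\<^sub>1"])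
    show "AE \<omega> in M. finite {(k, n). 1 \<le> k \<and> 1 \<le> n \<and> norming (ln (real (k * n))) + \<epsilon> < X k n \<omega>}"
      if "0 < \<epsilon>" "\<epsilon> \<le> min \<epsilon>\<^sub>0 \<epsilon>\<^sub>1" for \<epsilon>
      using that int1 unfolding \<psi>_def q_def by (intro AE_finite_exceedances) auto
    show "AE \<omega> in M. finite {(m, j). 1 \<le> m \<and> 1 \<le> j \<and>
        (\<forall>k\<in>{1..m}. \<forall>n\<in>{1..j}. X k n \<omega> < norming (ln (real (m * j))) - \<epsilon>)}"
      if "0 < \<epsilon>" "\<epsilon> \<le> min \<epsilon>\<^sub>0 \<epsilon>\<^sub>1" for \<epsilon>
      using that int4 \<open>0 < A\<close> unfolding \<psi>_def by (intro lower.AE_finite_low_rectangles[where A = A]) auto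
  qed (use \<open>0 < \<epsilon>\<^sub>0\<close> \<open>0 < \<epsilon>\<^sub>1\<close> in simp)
  then show ?thesis by (simp add: norming_def \<psi>_def)
qed

end
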